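(* Let $A, B\in\mathbb{C}^{n\times n}$ and $D\in\mathbb{C}^{k\times k}$ be Hermitian with $B$ positive definite. Let $\lambda_1\le\lambda_2\le\cdots\le\lambda_n$ be the eigenvalues of the pencil $A-\lambda B$, with $U\in\mathbb{C}^{n\times n}$ such that $U^{\mathrm{H}}AU=\operatorname{diag}(\lambda_1,\ldots,\lambda_n)$ and $U^{\mathrm{H}}BU=I_n$. Let $Q\in\mathbb{C}^{k\times k}$ be unitary with $Q^{\mathrm{H}}DQ=\Omega=\operatorname{diag}(\omega_1,\ldots,\omega_k)$, where $\omega_1\ge\cdots\ge\omega_\ell\ge 0\ge\omega_{\ell+1}\ge\cdots\ge\omega_k$ for some $0\le \ell\le k$. Then $$\min_{X\in\mathbb{C}^{n\times k},\,X^{\mathrm{H}}BX=I_k}\operatorname{trace}(DX^{\mathrm{H}}AX)=\sum_{i=1}^{\ell}\omega_i\lambda_i+\sum_{i=\ell+1}^k\omega_i\lambda_{i+n-k}.$$ Furthermore, any minimizer $X_{\mathrm{opt}}$ satisfies: (a) If $D$ is nonsingular, then $\mathcal{R}(X_{\mathrm{opt}}Q)$ is the eigenspace of $A-\lambda B$ associated with its $\ell$ smallest and $k-\ell$ largest eigenvalues. If moreover all $\omega_i$ are distinct, then $(X_{\mathrm{opt}}Q)^{\mathrm{H}}AX_{\mathrm{opt}}Q=\operatorname{diag}(\lambda_1,\ldots,\lambda_\ell,\lambda_{n-k+\ell+1},\ldots,\lambda_n)$. (b) Suppose $D$ (possibly singular) has $\ell_+$ positive and $\ell_-$ negative eigenvalues,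 and let $\widehat Q\in\mathbb{C}^{k\times(\ell_++\ell_-)}$ consist of the first $\ell_+$ and last $\ell_-$ columns of $Q$. Then $\mathcal{R}(X_{\mathrm{opt}}\widehat Q)$ is the eigenspace of $A-\lambda B$ associated with its $\ell_+$ smallest and $\ell_-$ largest eigenvalues. If moreover the nonzero eigenvalues of $D$ are distinct, then $(X_{\mathrm{opt}}\widehat Q)^{\mathrm{H}}AX_{\mathrm{opt}}\widehat Q=\operatorname{diag}(\lambda_1,\ldots,\lambda_{\ell_+},\lambda_{n-\ell_-+1},\ldots,\lambda_n)$.
   Context: $X^{\mathrm{H}}$ denotes conjugate transpose, $\mathcal{R}(\cdot)$ the column space (range), and $k\le n$. "Eigenspace associated with a set of eigenvalues" means the subspace spanned by eigenvectors $u$ ($Au=\lambda Bu$) of the pencil corresponding to those eigenvalues. *)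

theory Defs
  imports "Jordan_Normal_Form.Schur_Decomposition"
begin

text \<open>Conjugate transpose is the library's mat_adjoint (dimensions swapped).\<close>

definition mtrace :: "complex mat \<Rightarrow> complex" where
  "mtrace M = (\<Sum>i<dim_row M. M $$ (i, i))"

definition hermitian_mat :: "nat \<Rightarrow> complex mat \<Rightarrow> bool" where
  "hermitian_mat n M \<longleftrightarrow> M \<in> carrier_mat n n \<and> mat_adjoint M = M"

definition pos_def_mat :: "nat \<Rightarrow> complex mat \<Rightarrow> bool" where
  "pos_def_mat n M \<longleftrightarrow> hermitian_mat n M \<and>
     (\<forall>x \<in> carrier_vec n. x \<noteq> 0\<^sub>v n \<longrightarrow>
        conjugate x \<bullet> (M *\<^sub>v x) \<in> \<real> \<and> Re (conjugate x \<bullet> (M *\<^sub>v x)) > 0)"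

definition unitary_mat :: "nat \<Rightarrow> complex mat \<Rightarrow> bool" where
  "unitary_mat k Q \<longleftrightarrow> Q \<in> carrier_mat k k \<and> mat_adjoint Q * Q = 1\<^sub>m k"

definition diagm :: "nat \<Rightarrow> (nat \<Rightarrow> real) \<Rightarrow> complex mat" where
  "diagm k f = mat k k (\<lambda>(i, j). if i = j then complex_of_real (f i) else 0)"

definition colspace :: "complex mat \<Rightarrow> complex vec set" where
  "colspace M = {M *\<^sub>v y | y. y \<in> carrier_vec (dim_col M)}"

text \<open>S is the eigenspace of the pencil A - lambda B (A, B of size n) associated
  with the eigenvalues mu 0, ..., mu (m-1) (counted with multiplicity): S is spanned by
  m (B-orthonormal, hence linearly independent) eigenvectors v_j with A v_j = mu_j B v_j.\<close>
definition pencil_eigenspace ::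
  "nat \<Rightarrow> complex mat \<Rightarrow> complex mat \<Rightarrow> nat \<Rightarrow> (nat \<Rightarrow> real) \<Rightarrow> complex vec set \<Rightarrow> bool" where
  "pencil_eigenspace n A B m mu S \<longleftrightarrow>
     (\<exists>V \<in> carrier_mat n m. mat_adjoint V * B * V = 1\<^sub>m m \<and>
        A * V = B * V * diagm m mu \<and> colspace V = S)"

definition first_last_cols :: "nat \<Rightarrow> nat \<Rightarrow> complex mat \<Rightarrow> complex mat" where
  "first_last_cols p q Q = mat (dim_row Q) (p + q)
     (\<lambda>(i, j). if j < p then Q $$ (i, j) else Q $$ (i, j + dim_col Q - (p + q)))"

end

theory Submission
  imports Defs
begin

(* With Z = U^H B X Q the constraint becomes Z^H Z = I and the objective becomes
   sum_j omega_j sum_i lambda_i |Z_ij|^2, a weighted sum of averages of the sorted lambda_i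
   against the columns of the substochastic matrix (|Z_ij|^2).  Only the columns with nonzero
   weight matter; Abel summation over the positive weights, and over the negative ones after
   reversing the spectrum, reduces the bound to sum_{j<m} lambda_j <= sum_{j<m} (average of
   column j), which holds because the first m columns put total mass m on rows of mass at most 1.
   Equality forces each row of the relevant block of Z to carry full mass strictly below the
   threshold eigenvalue and none strictly above it.  Hence the projection Z Z^H does not mix
   eigenspaces of diag(lambda), and a greedy Gram-Schmidt construction, guided by the trace of
   the projection on each eigenspace, gives an orthonormal basis of its range made of
   eigenvectors with the extreme eigenvalues.  For distinct nonzero weights the equality cases
   of the individual partial sums show that Z itself consists of such eigenvectors. *)

lemma index_mult_mat_sum:
  fixes A B :: "'a :: semiring_0 mat"
  assumes "i < dim_row A" "j < dim_col B" "dim_col A = dim_row B"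
  shows "(A * B) $$ (i, j) = (\<Sum>m<dim_row B. A $$ (i, m) * B $$ (m, j))"
  using assms by (auto simp: scalar_prod_def atLeast0LessThan intro!: sum.cong)

lemma mat_adjoint_dims [simp]:
  "dim_row (mat_adjoint M) = dim_col M" "dim_col (mat_adjoint M) = dim_row M"
  unfolding mat_adjoint_def by auto

lemma mat_adjoint_carrier: "M \<in> carrier_mat a b \<Longrightarrow> mat_adjoint M \<in> carrier_mat b a"
  by auto

lemma index_mat_adjoint [simp]:
  "i < dim_col M \<Longrightarrow> j < dim_row M \<Longrightarrow> mat_adjoint M $$ (i, j) = conjugate (M $$ (j, i))"
  unfolding mat_adjoint_def by (simp add: mat_of_rows_def)

lemma mat_adjoint_adjoint [simp]: "mat_adjoint (mat_adjoint M) = M"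
  by (rule eq_matI) auto

lemma mat_adjoint_one [simp]: "mat_adjoint (1\<^sub>m n :: complex mat) = 1\<^sub>m n"
  by (rule eq_matI) (auto simp: one_mat_def)

lemma mat_adjoint_mult:
  fixes A B :: "'a :: conjugatable_field mat"
  assumes "A \<in> carrier_mat n m" "B \<in> carrier_mat m k"
  shows "mat_adjoint (A * B) = mat_adjoint B * mat_adjoint A"
  by (rule eq_matI)
    (use assms in \<open>auto simp: index_mult_mat_sum sum_conjugate conjugate_dist_mul mult.commute
       simp del: index_mult_mat(1)\<close>)

lemma mtrace_mult_comm:
  assumes "A \<in> carrier_mat n m" "B \<in> carrier_mat m n"
  shows "mtrace (A * B) = mtrace (B * A)"
  using assms unfolding mtrace_def
  by (simp add: index_mult_mat_sum sum.swap[of _ "{..<n}"] mult.commute del: index_mult_mat(1))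

lemma unitary_mat_mult_adjoint:
  assumes "unitary_mat k Q"
  shows "Q * mat_adjoint Q = 1\<^sub>m k"
  using assms mat_mult_left_right_inverse[of "mat_adjoint Q" k Q] mat_adjoint_carrier[of Q k k]
  unfolding unitary_mat_def by auto

lemma diagm_carrier [simp]: "diagm k f \<in> carrier_mat k k"
  and diagm_dims [simp]: "dim_row (diagm k f) = k" "dim_col (diagm k f) = k"
  unfolding diagm_def by auto

lemma index_diagm [simp]:
  "i < k \<Longrightarrow> j < k \<Longrightarrow> diagm k f $$ (i, j) = (if i = j then complex_of_real (f i) else 0)"
  unfolding diagm_def by auto

lemma index_diagm_mult:
  assumes "W \<in> carrier_mat n r" "i < n" "j < r"
  shows "(diagm n f * W) $$ (i, j) = complex_of_real (f i) * W $$ (i, j)"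
proof -
  have "(diagm n f * W) $$ (i, j) = (\<Sum>m<n. diagm n f $$ (i, m) * W $$ (m, j))"
    using assms by (subst index_mult_mat_sum) auto
  also have "\<dots> = (\<Sum>m<n. if m = i then complex_of_real (f i) * W $$ (i, j) else 0)"
    by (rule sum.cong) (use assms in auto)
  finally show ?thesis using assms by simp
qed

lemma index_mult_diagm:
  assumes "W \<in> carrier_mat n r" "i < n" "j < r"
  shows "(W * diagm r f) $$ (i, j) = W $$ (i, j) * complex_of_real (f j)"
proof -
  have "(W * diagm r f) $$ (i, j) = (\<Sum>m<r. W $$ (i, m) * diagm r f $$ (m, j))"
    using assms by (subst index_mult_mat_sum) auto
  also have "\<dots> = (\<Sum>m<r. if m = j then W $$ (i, j) * complex_of_real (f j) else 0)"
    by (rule sum.cong) (use assms in auto)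
  finally show ?thesis using assms by simp
qed

lemma index_adjoint_diagm_mult:
  assumes Z: "Z \<in> carrier_mat n r" and W: "W \<in> carrier_mat n s" and "a < r" "b < s"
  shows "(mat_adjoint Z * diagm n f * W) $$ (a, b)
    = (\<Sum>i<n. cnj (Z $$ (i, a)) * complex_of_real (f i) * W $$ (i, b))"
  unfolding assoc_mult_mat[OF mat_adjoint_carrier[OF Z] diagm_carrier W]
  using assms by (subst index_mult_mat_sum)
    (auto simp: index_diagm_mult mult.assoc simp del: index_mult_mat(1) intro!: sum.cong)

lemma diagm_mult_eq_mult_diagm:
  assumes W: "W \<in> carrier_mat n p"
    and "\<And>i j. i < n \<Longrightarrow> j < p \<Longrightarrow> W $$ (i, j) \<noteq> 0 \<Longrightarrow> lam i = mu j"
  shows "diagm n lam * W = W * diagm p mu"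
  by (rule eq_matI) (use assms in \<open>auto simp: index_diagm_mult index_mult_diagm simp del: index_mult_mat(1)\<close>)

lemma cnj_mult_self: "cnj z * z = complex_of_real ((cmod z)\<^sup>2)"
  by (metis complex_norm_square mult.commute)

lemma adjoint_mult_congruence:
  assumes U: "U \<in> carrier_mat n m" and N: "N \<in> carrier_mat m r" and M: "M \<in> carrier_mat n n"
  shows "mat_adjoint (U * N) * M * (U * N) = mat_adjoint N * (mat_adjoint U * M * U) * N"
proof -
  have Ua: "mat_adjoint U \<in> carrier_mat m n" and Na: "mat_adjoint N \<in> carrier_mat r m"
    using U N by (simp_all add: mat_adjoint_carrier)
  have UaM: "mat_adjoint U * M \<in> carrier_mat m n" using mult_carrier_mat[OF Ua M] .
  have "mat_adjoint N * mat_adjoint U * M * (U * N) = mat_adjoint N * (mat_adjoint U * M) * (U * N)"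
    using assoc_mult_mat[OF Na Ua M] by simp
  also have "\<dots> = mat_adjoint N * ((mat_adjoint U * M) * (U * N))"
    using assoc_mult_mat[OF Na UaM mult_carrier_mat[OF U N]] .
  also have "(mat_adjoint U * M) * (U * N) = (mat_adjoint U * M * U) * N"
    using assoc_mult_mat[OF UaM U N] by simp
  also have "mat_adjoint N * ((mat_adjoint U * M * U) * N) = mat_adjoint N * (mat_adjoint U * M * U) * N"
    using assoc_mult_mat[OF Na mult_carrier_mat[OF UaM U] N] by simp
  finally show ?thesis unfolding mat_adjoint_mult[OF U N] .
qed

lemma mtrace_diagm_mult:
  assumes "T \<in> carrier_mat k k"
  shows "mtrace (diagm k w * T) = (\<Sum>j<k. complex_of_real (w j) * T $$ (j, j))"
  using assms unfolding mtrace_def by (simp add: index_diagm_mult del: index_mult_mat(1))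

lemma mtrace_unitary_weighted:
  assumes D: "D \<in> carrier_mat k k" and Q: "unitary_mat k Q"
    and QDQ: "mat_adjoint Q * D * Q = diagm k w" and Z: "Z \<in> carrier_mat n k"
  shows "mtrace (D * (mat_adjoint (Z * mat_adjoint Q) * diagm n lam * (Z * mat_adjoint Q)))
    = complex_of_real (\<Sum>j<k. w j * (\<Sum>i<n. lam i * (cmod (Z $$ (i, j)))\<^sup>2))"
proof -
  have Qc: "Q \<in> carrier_mat k k" and Qa: "mat_adjoint Q \<in> carrier_mat k k"
    using Q unfolding unitary_mat_def by (auto simp: mat_adjoint_carrier)
  define T where "T = mat_adjoint Z * diagm n lam * Z"
  have T: "T \<in> carrier_mat k k"
    unfolding T_def using mult_carrier_mat[OF mult_carrier_mat[OF mat_adjoint_carrier[OF Z] diagm_carrier] Z] .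
  have "mat_adjoint (Z * mat_adjoint Q) * diagm n lam * (Z * mat_adjoint Q) = Q * T * mat_adjoint Q"
    using adjoint_mult_congruence[OF Z Qa diagm_carrier] unfolding T_def by simp
  then have "mtrace (D * (mat_adjoint (Z * mat_adjoint Q) * diagm n lam * (Z * mat_adjoint Q)))
      = mtrace ((D * Q * T) * mat_adjoint Q)"
    using assoc_mult_mat[OF D mult_carrier_mat[OF Qc T] Qa] assoc_mult_mat[OF D Qc T] by simp
  also have "\<dots> = mtrace (mat_adjoint Q * (D * Q * T))"
    by (rule mtrace_mult_comm[OF mult_carrier_mat[OF mult_carrier_mat[OF D Qc] T] Qa])
  also have "mat_adjoint Q * (D * Q * T) = diagm k w * T"
    using assoc_mult_mat[OF Qa mult_carrier_mat[OF D Qc] T] assoc_mult_mat[OF Qa D Qc] QDQ by simp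
  also have "mtrace (diagm k w * T) = (\<Sum>j<k. complex_of_real (w j * (\<Sum>i<n. lam i * (cmod (Z $$ (i, j)))\<^sup>2)))"
  proof -
    have entry: "cnj z * complex_of_real l * z = complex_of_real (l * (cmod z)\<^sup>2)" for z l
      by (metis cnj_mult_self mult.commute mult.left_commute of_real_mult)
    have "T $$ (j, j) = complex_of_real (\<Sum>i<n. lam i * (cmod (Z $$ (i, j)))\<^sup>2)" if "j < k" for j
      unfolding T_def index_adjoint_diagm_mult[OF Z Z that that] entry by (rule of_real_sum[symmetric])
    then show ?thesis unfolding mtrace_diagm_mult[OF T] by (simp add: of_real_mult)
  qed
  finally show ?thesis by simp
qed

lemma diagm_entry_nonzero_if_det_nonzero:
  assumes D: "D \<in> carrier_mat k k" and Q: "unitary_mat k Q"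
    and QDQ: "mat_adjoint Q * D * Q = diagm k w" and det: "det D \<noteq> 0" and j: "j < k"
  shows "w j \<noteq> 0"
proof
  assume w0: "w j = 0"
  have Qc: "Q \<in> carrier_mat k k" and Qa: "mat_adjoint Q \<in> carrier_mat k k"
    using Q unfolding unitary_mat_def by (auto simp: mat_adjoint_carrier)
  have "det (mat_adjoint Q) * det Q = 1"
    using det_mult[OF Qa Qc] Q unfolding unitary_mat_def by simp
  then have "det (diagm k w) = det D"
    using QDQ det_mult[OF mult_carrier_mat[OF Qa D] Qc] det_mult[OF Qa D] by (simp add: algebra_simps)
  moreover have "det (diagm k w) = prod_list (diag_mat (diagm k w))"
    by (rule det_upper_triangular) (auto simp: upper_triangular_def)
  moreover have "0 \<in> set (diag_mat (diagm k w))" unfolding diag_mat_def using j w0 by force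
  ultimately show False using det prod_list_zero_iff by metis
qed

lemma first_last_cols_carrier: "first_last_cols a b N \<in> carrier_mat (dim_row N) (a + b)"
  unfolding first_last_cols_def by auto

lemma index_first_last_cols:
  "i < dim_row N \<Longrightarrow> j < a + b \<Longrightarrow>
    first_last_cols a b N $$ (i, j) = (if j < a then N $$ (i, j) else N $$ (i, j + dim_col N - (a + b)))"
  unfolding first_last_cols_def by auto

lemma mult_first_last_cols:
  assumes "dim_col M = dim_row N" "a + b \<le> dim_col N"
  shows "M * first_last_cols a b N = first_last_cols a b (M * N)"
  by (rule eq_matI)
    (use assms in \<open>auto simp: first_last_cols_def index_mult_mat_sum simp del: index_mult_mat(1)\<close>)

lemma colspace_mult_right_invertible:
  assumes M: "M \<in> carrier_mat n p" and R: "R \<in> carrier_mat p p" and S: "S \<in> carrier_mat p p"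
    and RS: "R * S = 1\<^sub>m p"
  shows "colspace (M * R) = colspace M"
proof
  show "colspace (M * R) \<subseteq> colspace M"
  proof
    fix x assume "x \<in> colspace (M * R)"
    then obtain y where y: "y \<in> carrier_vec p" "x = M * R *\<^sub>v y" unfolding colspace_def using R by auto
    then have "x = M *\<^sub>v (R *\<^sub>v y)" "R *\<^sub>v y \<in> carrier_vec p" using M R by auto
    then show "x \<in> colspace M" unfolding colspace_def using M by auto
  qed
  show "colspace M \<subseteq> colspace (M * R)"
  proof
    fix x assume "x \<in> colspace M"
    then obtain y where y: "y \<in> carrier_vec p" "x = M *\<^sub>v y" unfolding colspace_def using M by auto
    have "M *\<^sub>v y = M *\<^sub>v ((R * S) *\<^sub>v y)" using RS y by simp
    also have "\<dots> = (M * R) *\<^sub>v (S *\<^sub>v y)" using M R S y by simp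
    finally have "x = (M * R) *\<^sub>v (S *\<^sub>v y)" using y by simp
    then show "x \<in> colspace (M * R)" unfolding colspace_def using R S y(1) by auto
  qed
qed

lemma first_last_cols_all: "a + b = dim_col N \<Longrightarrow> first_last_cols a b N = N"
  unfolding first_last_cols_def by (rule eq_matI) auto

section \<open>Orthonormal columns and orthogonal projections\<close>

text \<open>Stated for arrays rather than matrices so that columns can be appended one at a time.\<close>

definition orthonormal_cols :: "nat \<Rightarrow> nat \<Rightarrow> (nat \<Rightarrow> nat \<Rightarrow> complex) \<Rightarrow> bool" where
  "orthonormal_cols n r f \<longleftrightarrow>
     (\<forall>j<r. \<forall>j'<r. (\<Sum>m<n. cnj (f m j) * f m j') = (if j = j' then 1 else 0))"

lemma orthonormal_colsD:
  "orthonormal_cols n r f \<Longrightarrow> j < r \<Longrightarrow> j' < r \<Longrightarrow>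
    (\<Sum>m<n. cnj (f m j) * f m j') = (if j = j' then 1 else 0)"
  unfolding orthonormal_cols_def by blast

lemma orthonormal_cols_norm:
  assumes "orthonormal_cols n r f" "j < r"
  shows "(\<Sum>i<n. (cmod (f i j))\<^sup>2) = 1"
proof -
  have "complex_of_real (\<Sum>i<n. (cmod (f i j))\<^sup>2) = (\<Sum>i<n. cnj (f i j) * f i j)"
    by (simp add: cnj_mult_self)
  also have "\<dots> = 1" using orthonormal_colsD[OF assms assms(2)] by simp
  finally show ?thesis by (metis of_real_eq_1_iff)
qed

lemma orthonormal_cols_snoc:
  assumes F: "orthonormal_cols n r F" and v: "(\<Sum>m<n. cnj (v m) * v m) = 1"
    and orth: "\<And>j. j < r \<Longrightarrow> (\<Sum>m<n. cnj (F m j) * v m) = 0"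
  shows "orthonormal_cols n (Suc r) (\<lambda>i j. if j < r then F i j else v i)"
  unfolding orthonormal_cols_def
proof (intro allI impI)
  fix j j' assume j: "j < Suc r" and j': "j' < Suc r"
  have orth': "(\<Sum>m<n. cnj (v m) * F m j) = 0" if "j < r" for j
  proof -
    have "cnj (\<Sum>m<n. cnj (F m j) * v m) = 0" using orth[OF that] by simp
    then show ?thesis by (simp add: mult.commute)
  qed
  show "(\<Sum>m<n. cnj (if j < r then F m j else v m) * (if j' < r then F m j' else v m))
      = (if j = j' then 1 else 0)"
    using orthonormal_colsD[OF F] orth orth' v j j' by (cases "j < r"; cases "j' < r") auto
qed

lemma adjoint_mult_self_eq_one_iff:
  assumes Z: "Z \<in> carrier_mat n p"
  shows "mat_adjoint Z * Z = 1\<^sub>m p \<longleftrightarrow> orthonormal_cols n p (\<lambda>i j. Z $$ (i, j))"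
proof -
  have entry: "(mat_adjoint Z * Z) $$ (a, b) = (\<Sum>i<n. cnj (Z $$ (i, a)) * Z $$ (i, b))"
    if "a < p" "b < p" for a b
    using Z that by (simp add: index_mult_mat_sum del: index_mult_mat(1))
  show ?thesis
  proof
    assume "mat_adjoint Z * Z = 1\<^sub>m p"
    then show "orthonormal_cols n p (\<lambda>i j. Z $$ (i, j))"
      unfolding orthonormal_cols_def using entry by (metis index_one_mat(1))
  next
    assume "orthonormal_cols n p (\<lambda>i j. Z $$ (i, j))"
    then show "mat_adjoint Z * Z = 1\<^sub>m p"
      using Z entry unfolding orthonormal_cols_def by (intro eq_matI) (auto simp del: index_mult_mat(1))
  qed
qed

definition selection_mat :: "nat \<Rightarrow> nat \<Rightarrow> (nat \<Rightarrow> nat) \<Rightarrow> complex mat" where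
  "selection_mat n k e = mat n k (\<lambda>(i, j). if i = e j then 1 else 0)"

lemma selection_mat_carrier: "selection_mat n k e \<in> carrier_mat n k"
  unfolding selection_mat_def by simp

lemma selection_mat_orthonormal:
  assumes "inj_on e {..<k}" "e ` {..<k} \<subseteq> {..<n}"
  shows "mat_adjoint (selection_mat n k e) * selection_mat n k e = 1\<^sub>m k"
  unfolding adjoint_mult_self_eq_one_iff[OF selection_mat_carrier] orthonormal_cols_def
proof (intro allI impI)
  fix j j' assume j: "j < k" and j': "j' < k"
  have "(\<Sum>m<n. cnj (selection_mat n k e $$ (m, j)) * selection_mat n k e $$ (m, j'))
      = (\<Sum>m<n. if m = e j then (if m = e j' then 1 else 0) else 0)"
    by (rule sum.cong) (use j j' in \<open>auto simp: selection_mat_def\<close>)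
  also have "\<dots> = (if j = j' then 1 else 0)"
    using assms j j' by (auto simp: inj_on_def)
  finally show "(\<Sum>m<n. cnj (selection_mat n k e $$ (m, j)) * selection_mat n k e $$ (m, j'))
      = (if j = j' then 1 else 0)" .
qed

lemma first_last_cols_orthonormal:
  assumes Z: "Z \<in> carrier_mat n k" and ZZ: "mat_adjoint Z * Z = 1\<^sub>m k" and ab: "a + b \<le> k"
  shows "mat_adjoint (first_last_cols a b Z) * first_last_cols a b Z = 1\<^sub>m (a + b)"
proof -
  define sig where "sig j = (if j < a then j else j + k - (a + b))" for j
  have sig: "sig j < k" "sig j = sig j' \<longleftrightarrow> j = j'" if "j < a + b" "j' < a + b" for j j'
    using that ab unfolding sig_def by auto
  have idx: "first_last_cols a b Z $$ (i, j) = Z $$ (i, sig j)" if "i < n" "j < a + b" for i j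
    using index_first_last_cols[of i Z j a b] that Z unfolding sig_def by simp
  have "(\<Sum>i<n. cnj (first_last_cols a b Z $$ (i, j)) * first_last_cols a b Z $$ (i, j'))
      = (if j = j' then 1 else 0)" if "j < a + b" "j' < a + b" for j j'
  proof -
    have "(\<Sum>i<n. cnj (first_last_cols a b Z $$ (i, j)) * first_last_cols a b Z $$ (i, j'))
        = (\<Sum>i<n. cnj (Z $$ (i, sig j)) * Z $$ (i, sig j'))"
      by (rule sum.cong) (simp_all add: idx that)
    also have "\<dots> = (if sig j = sig j' then 1 else 0)"
      using ZZ sig(1)[OF that] sig(1)[OF that(2,1)] orthonormal_colsD
      unfolding adjoint_mult_self_eq_one_iff[OF Z] by blast
    finally show ?thesis using sig(2)[OF that] by simp
  qed
  then show ?thesis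
    using first_last_cols_carrier[of a b Z] Z
    unfolding adjoint_mult_self_eq_one_iff[OF first_last_cols_carrier[of a b Z, unfolded carrier_matD(1)[OF Z]]]
      orthonormal_cols_def by auto
qed

locale orth_projection =
  fixes n :: nat and P :: "nat \<Rightarrow> nat \<Rightarrow> complex"
  assumes hermitian: "a < n \<Longrightarrow> b < n \<Longrightarrow> P a b = cnj (P b a)"
    and idempotent: "a < n \<Longrightarrow> b < n \<Longrightarrow> (\<Sum>m<n. P a m * P m b) = P a b"
begin

lemma diag_real: "i < n \<Longrightarrow> P i i = complex_of_real (Re (P i i))"
  using hermitian[of i i] by (simp add: complex_eq_iff)

lemma residual_norm_sq:
  assumes i: "i < n"
  shows "(\<Sum>m<n. (cmod ((if m = i then 1 else 0) - P m i))\<^sup>2) = 1 - Re (P i i)"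
proof -
  define v where "v m = (if m = i then 1 else 0) - P m i" for m
  have "cnj (v m) * v m = (if m = i then 1 - 2 * P i i else 0) + P i m * P m i" if "m < n" for m
  proof (cases "m = i")
    case True
    have "cnj (P i i) = P i i" using hermitian[OF i i] by simp
    then show ?thesis using True unfolding v_def by (simp add: algebra_simps)
  next
    case False
    then show ?thesis using hermitian[OF i that] unfolding v_def by simp
  qed
  then have "(\<Sum>m<n. cnj (v m) * v m) = (1 - 2 * P i i) + (\<Sum>m<n. P i m * P m i)"
    using i by (simp add: sum.distrib)
  also have "\<dots> = complex_of_real (1 - Re (P i i))"
    using idempotent[OF i i] diag_real[OF i] by (simp add: algebra_simps)
  finally have "complex_of_real (\<Sum>m<n. (cmod (v m))\<^sup>2) = complex_of_real (1 - Re (P i i))"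
    by (simp only: cnj_mult_self of_real_sum[symmetric])
  then show ?thesis unfolding v_def of_real_eq_iff .
qed

lemma diag_le_one: "i < n \<Longrightarrow> Re (P i i) \<le> 1"
  using residual_norm_sq[of i] sum_nonneg[of "{..<n}" "\<lambda>m. (cmod ((if m = i then 1 else 0) - P m i))\<^sup>2"]
  by simp

lemma col_eq_unit_if_diag_one:
  assumes i: "i < n" and one: "Re (P i i) = 1" and m: "m < n"
  shows "P m i = (if m = i then 1 else 0)"
proof -
  have "(\<Sum>m<n. (cmod ((if m = i then 1 else 0) - P m i))\<^sup>2) = 0"
    using residual_norm_sq[OF i] one by simp
  then have "(cmod ((if m = i then 1 else 0) - P m i))\<^sup>2 = 0"
    using m by (subst (asm) sum_nonneg_eq_0_iff) auto
  then show ?thesis by simp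
qed

end

text \<open>An orthonormal family F in the range of P is extended by a normalised residual
  P e_i - F F^H e_i with i in C; one of these is nonzero because the trace of P on C exceeds
  the number of columns of F living in C.\<close>

locale orth_projection_frame = orth_projection +
  fixes r :: nat and F :: "nat \<Rightarrow> nat \<Rightarrow> complex"
  assumes orthonormal: "orthonormal_cols n r F"
    and in_range: "a < n \<Longrightarrow> j < r \<Longrightarrow> (\<Sum>m<n. P a m * F m j) = F a j"
begin

definition residual :: "nat \<Rightarrow> nat \<Rightarrow> complex" where
  "residual i0 m = P m i0 - (\<Sum>j<r. F m j * cnj (F i0 j))"

lemma residual_orthogonal:
  assumes j: "j < r" and i0: "i0 < n"
  shows "(\<Sum>m<n. cnj (F m j) * residual i0 m) = 0"
proof -
  have "(\<Sum>m<n. cnj (F m j) * P m i0) = cnj (\<Sum>m<n. P i0 m * F m j)"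
    by (simp add: hermitian[OF _ i0] mult.commute)
  also have "\<dots> = cnj (F i0 j)" using in_range[OF i0 j] by simp
  finally have P_part: "(\<Sum>m<n. cnj (F m j) * P m i0) = cnj (F i0 j)" .
  have "(\<Sum>m<n. cnj (F m j) * (\<Sum>j'<r. F m j' * cnj (F i0 j')))
      = (\<Sum>j'<r. (\<Sum>m<n. cnj (F m j) * F m j') * cnj (F i0 j'))"
    by (simp add: sum_distrib_left sum_distrib_right mult.assoc sum.swap[of _ "{..<n}"])
  also have "\<dots> = (\<Sum>j'<r. if j = j' then cnj (F i0 j') else 0)"
    by (rule sum.cong) (auto simp: orthonormal_colsD[OF orthonormal j])
  also have "\<dots> = cnj (F i0 j)" using j by simp
  finally show ?thesis
    unfolding residual_def using P_part by (simp add: right_diff_distrib sum_subtractf)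
qed

lemma residual_in_range:
  assumes a: "a < n" and i0: "i0 < n"
  shows "(\<Sum>m<n. P a m * residual i0 m) = residual i0 a"
proof -
  have "(\<Sum>m<n. P a m * (\<Sum>j<r. F m j * cnj (F i0 j)))
      = (\<Sum>j<r. (\<Sum>m<n. P a m * F m j) * cnj (F i0 j))"
    by (simp add: sum_distrib_left sum_distrib_right mult.assoc sum.swap[of _ "{..<n}"])
  also have "\<dots> = (\<Sum>j<r. F a j * cnj (F i0 j))" by (simp add: in_range[OF a])
  finally show ?thesis
    unfolding residual_def using idempotent[OF a i0] by (simp add: right_diff_distrib sum_subtractf)
qed

lemma residual_norm:
  assumes i0: "i0 < n"
  shows "(\<Sum>m<n. cnj (residual i0 m) * residual i0 m)
    = complex_of_real (Re (P i0 i0) - (\<Sum>j<r. (cmod (F i0 j))\<^sup>2))"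
proof -
  let ?u = "residual i0"
  have "(\<Sum>m<n. cnj (?u m) * P m i0) = cnj (\<Sum>m<n. P i0 m * ?u m)"
    by (simp add: hermitian[OF _ i0] mult.commute)
  also have "\<dots> = cnj (?u i0)" using residual_in_range[OF i0 i0] by simp
  finally have P_part: "(\<Sum>m<n. cnj (?u m) * P m i0) = cnj (?u i0)" .
  have orth: "(\<Sum>m<n. cnj (?u m) * F m j) = 0" if "j < r" for j
  proof -
    have "cnj (\<Sum>m<n. cnj (F m j) * ?u m) = 0" using residual_orthogonal[OF that i0] by simp
    then show ?thesis by (simp add: mult.commute)
  qed
  have "(\<Sum>m<n. cnj (?u m) * (\<Sum>j<r. F m j * cnj (F i0 j)))
      = (\<Sum>j<r. (\<Sum>m<n. cnj (?u m) * F m j) * cnj (F i0 j))"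
    by (simp add: sum_distrib_left sum_distrib_right mult.assoc sum.swap[of _ "{..<n}"])
  also have "\<dots> = 0" by (simp add: orth)
  finally have F_part: "(\<Sum>m<n. cnj (?u m) * (\<Sum>j<r. F m j * cnj (F i0 j))) = 0" .
  have "(\<Sum>m<n. cnj (?u m) * ?u m) = cnj (?u i0)"
    using P_part F_part by (simp add: residual_def[of i0] right_diff_distrib sum_subtractf)
  also have "?u i0 = complex_of_real (Re (P i0 i0) - (\<Sum>j<r. (cmod (F i0 j))\<^sup>2))"
  proof -
    have "(\<Sum>j<r. F i0 j * cnj (F i0 j)) = complex_of_real (\<Sum>j<r. (cmod (F i0 j))\<^sup>2)"
      by (simp only: of_real_sum complex_norm_square)
    then show ?thesis unfolding residual_def using diag_real[OF i0] by (metis of_real_diff)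
  qed
  finally show ?thesis by simp
qed

lemma residual_support:
  assumes C: "C \<subseteq> {..<n}" and invariant: "\<And>i j. i < n \<Longrightarrow> j \<in> C \<Longrightarrow> i \<notin> C \<Longrightarrow> P i j = 0"
    and split: "\<And>i j. i < n \<Longrightarrow> j < r \<Longrightarrow> F i j \<noteq> 0 \<Longrightarrow> i \<in> C \<longleftrightarrow> inC j"
    and i0: "i0 \<in> C" and i: "i < n" "i \<notin> C"
  shows "residual i0 i = 0"
proof -
  have "(\<Sum>j<r. F i j * cnj (F i0 j)) = 0"
    by (rule sum.neutral) (use split[OF i(1)] split[of i0] i0 C i(2) in fastforce)
  then show ?thesis unfolding residual_def using invariant[OF i(1) i0 i(2)] by simp
qed

lemma exists_unit_vector_extending:
  assumes C: "C \<subseteq> {..<n}" and invariant: "\<And>i j. i < n \<Longrightarrow> j \<in> C \<Longrightarrow> i \<notin> C \<Longrightarrow> P i j = 0"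
    and split: "\<And>i j. i < n \<Longrightarrow> j < r \<Longrightarrow> F i j \<noteq> 0 \<Longrightarrow> i \<in> C \<longleftrightarrow> inC j"
    and count: "real (card {j. j < r \<and> inC j}) < (\<Sum>i\<in>C. Re (P i i))"
  shows "\<exists>v. (\<Sum>m<n. cnj (v m) * v m) = 1 \<and> (\<forall>j<r. (\<Sum>m<n. cnj (F m j) * v m) = 0)
           \<and> (\<forall>a<n. (\<Sum>m<n. P a m * v m) = v a) \<and> (\<forall>i<n. i \<notin> C \<longrightarrow> v i = 0)"
proof -
  define d where "d i = Re (P i i) - (\<Sum>j<r. (cmod (F i j))\<^sup>2)" for i
  have mass_in_C: "(\<Sum>i\<in>C. (cmod (F i j))\<^sup>2) = (if inC j then 1 else 0)" if j: "j < r" for j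
  proof (cases "inC j")
    case True
    have "(\<Sum>i\<in>C. (cmod (F i j))\<^sup>2) = (\<Sum>i<n. (cmod (F i j))\<^sup>2)"
      by (rule sum.mono_neutral_left) (use C split j True in auto)
    then show ?thesis using orthonormal_cols_norm[OF orthonormal j] True by simp
  next
    case False
    have "(\<Sum>i\<in>C. (cmod (F i j))\<^sup>2) = 0"
      by (rule sum.neutral) (use C split j False in auto)
    then show ?thesis using False by simp
  qed
  have "(\<Sum>i\<in>C. d i) = (\<Sum>i\<in>C. Re (P i i)) - (\<Sum>j<r. \<Sum>i\<in>C. (cmod (F i j))\<^sup>2)"
    unfolding d_def by (simp add: sum_subtractf sum.swap[of _ C])
  also have "(\<Sum>j<r. \<Sum>i\<in>C. (cmod (F i j))\<^sup>2) = real (card {j. j < r \<and> inC j})"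
    by (simp add: mass_in_C sum.If_cases Int_def conj_commute)
  finally have "0 < (\<Sum>i\<in>C. d i)" using count by linarith
  then obtain i0 where i0C: "i0 \<in> C" and di0: "0 < d i0"
    by (metis not_le sum_nonpos)
  have i0: "i0 < n" using i0C C by auto
  define c where "c = complex_of_real (sqrt (d i0))"
  have c: "c \<noteq> 0" "cnj c * c = complex_of_real (d i0)"
    using di0 unfolding c_def by (simp_all flip: of_real_mult)
  show ?thesis
  proof (intro exI[of _ "\<lambda>m. residual i0 m / c"] conjI allI impI)
    have "(\<Sum>m<n. cnj (residual i0 m / c) * (residual i0 m / c))
        = (\<Sum>m<n. cnj (residual i0 m) * residual i0 m) / (cnj c * c)"
      by (simp add: sum_divide_distrib)
    then show "(\<Sum>m<n. cnj (residual i0 m / c) * (residual i0 m / c)) = 1"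
      using residual_norm[OF i0, folded d_def] c di0 by simp
    show "(\<Sum>m<n. cnj (F m j) * (residual i0 m / c)) = 0" if "j < r" for j
      using residual_orthogonal[OF that i0] by (simp add: sum_divide_distrib[symmetric])
    show "(\<Sum>m<n. P a m * (residual i0 m / c)) = residual i0 a / c" if "a < n" for a
      using residual_in_range[OF that i0] by (simp add: sum_divide_distrib[symmetric])
    show "residual i0 i / c = 0" if "i < n" "i \<notin> C" for i
      using residual_support[OF C invariant split i0C that] by simp
  qed
qed

end

lemma (in orth_projection) exists_orthonormal_cols_adapted:
  assumes "\<And>j. j < r \<Longrightarrow> Cs j \<subseteq> {..<n}"
    and "\<And>c i j. c < r \<Longrightarrow> i < n \<Longrightarrow> j \<in> Cs c \<Longrightarrow> i \<notin> Cs c \<Longrightarrow> P i j = 0"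
    and "\<And>j j'. j < r \<Longrightarrow> j' < r \<Longrightarrow> Cs j = Cs j' \<or> Cs j \<inter> Cs j' = {}"
    and "\<And>j. j < r \<Longrightarrow> real (card {j'. j' \<le> j \<and> Cs j' = Cs j}) \<le> (\<Sum>i\<in>Cs j. Re (P i i))"
  shows "\<exists>F. orthonormal_cols n r F \<and> (\<forall>a<n. \<forall>j<r. (\<Sum>m<n. P a m * F m j) = F a j)
           \<and> (\<forall>i<n. \<forall>j<r. F i j \<noteq> 0 \<longrightarrow> i \<in> Cs j)"
  using assms
proof (induction r)
  case 0
  show ?case by (auto simp: orthonormal_cols_def)
next
  case (Suc r)
  have "\<exists>F. orthonormal_cols n r F \<and> (\<forall>a<n. \<forall>j<r. (\<Sum>m<n. P a m * F m j) = F a j)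
           \<and> (\<forall>i<n. \<forall>j<r. F i j \<noteq> 0 \<longrightarrow> i \<in> Cs j)"
  proof (rule Suc.IH)
    show "Cs j \<subseteq> {..<n}" if "j < r" for j using Suc.prems(1) that by simp
    show "P i j = 0" if "c < r" "i < n" "j \<in> Cs c" "i \<notin> Cs c" for c i j
      using Suc.prems(2) that less_SucI by meson
    show "Cs j = Cs j' \<or> Cs j \<inter> Cs j' = {}" if "j < r" "j' < r" for j j'
      using Suc.prems(3) that by simp
    show "real (card {j'. j' \<le> j \<and> Cs j' = Cs j}) \<le> (\<Sum>i\<in>Cs j. Re (P i i))" if "j < r" for j
      using Suc.prems(4) that by simp
  qed
  then obtain F where F: "orthonormal_cols n r F"
    and PF: "\<And>a j. a < n \<Longrightarrow> j < r \<Longrightarrow> (\<Sum>m<n. P a m * F m j) = F a j"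
    and FC: "\<And>i j. i < n \<Longrightarrow> j < r \<Longrightarrow> F i j \<noteq> 0 \<Longrightarrow> i \<in> Cs j"
    by blast
  interpret orth_projection_frame n P r F
    using F PF by unfold_locales
  define C where "C = Cs r"
  have split: "i \<in> C \<longleftrightarrow> Cs j = C" if "i < n" "j < r" "F i j \<noteq> 0" for i j
  proof -
    have "Cs j = C \<or> Cs j \<inter> C = {}" using Suc.prems(3)[of j r] that(2) unfolding C_def by simp
    then show ?thesis using FC[OF that] by blast
  qed
  have "{j'. j' \<le> r \<and> Cs j' = Cs r} = insert r {j. j < r \<and> Cs j = C}"
    unfolding C_def by auto
  then have "real (card {j. j < r \<and> Cs j = C}) < (\<Sum>i\<in>C. Re (P i i))"
    using Suc.prems(4)[of r] unfolding C_def by simp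
  then obtain v where vn: "(\<Sum>m<n. cnj (v m) * v m) = 1"
    and vo: "\<And>j. j < r \<Longrightarrow> (\<Sum>m<n. cnj (F m j) * v m) = 0"
    and vr: "\<And>a. a < n \<Longrightarrow> (\<Sum>m<n. P a m * v m) = v a"
    and vC: "\<And>i. i < n \<Longrightarrow> i \<notin> C \<Longrightarrow> v i = 0"
    using exists_unit_vector_extending[of C "\<lambda>j. Cs j = C", OF _ _ split]
      Suc.prems(1)[of r] Suc.prems(2)[of r] unfolding C_def by blast
  define F' where "F' i j = (if j < r then F i j else v i)" for i j
  have "orthonormal_cols n (Suc r) F'"
    unfolding F'_def by (rule orthonormal_cols_snoc[OF F vn vo])
  moreover have "\<forall>a<n. \<forall>j<Suc r. (\<Sum>m<n. P a m * F' m j) = F' a j"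
    unfolding F'_def using PF vr by simp
  moreover have "\<forall>i<n. \<forall>j<Suc r. F' i j \<noteq> 0 \<longrightarrow> i \<in> Cs j"
    unfolding F'_def using FC vC less_Suc_eq unfolding C_def by auto
  ultimately show ?case by blast
qed

lemma index_mult_adjoint_self:
  assumes "Z \<in> carrier_mat n p" "a < n" "b < n"
  shows "(Z * mat_adjoint Z) $$ (a, b) = (\<Sum>m<p. Z $$ (a, m) * cnj (Z $$ (b, m)))"
  using assms by (simp add: index_mult_mat_sum del: index_mult_mat(1))

lemma mult_adjoint_self_mult:
  assumes Z: "Z \<in> carrier_mat n p" and ZZ: "mat_adjoint Z * Z = 1\<^sub>m p"
  shows "Z * mat_adjoint Z * Z = Z"
  using assoc_mult_mat[OF Z mat_adjoint_carrier[OF Z] Z] ZZ Z by simp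

lemma orth_projection_mult_adjoint_self:
  assumes Z: "Z \<in> carrier_mat n p" and ZZ: "mat_adjoint Z * Z = 1\<^sub>m p"
  shows "orth_projection n (\<lambda>a b. (Z * mat_adjoint Z) $$ (a, b))"
proof
  fix a b assume ab: "a < n" "b < n"
  show "(Z * mat_adjoint Z) $$ (a, b) = cnj ((Z * mat_adjoint Z) $$ (b, a))"
    using ab by (simp add: index_mult_adjoint_self[OF Z] mult.commute)
  have "Z * mat_adjoint Z * (Z * mat_adjoint Z) = Z * mat_adjoint Z"
    using assoc_mult_mat[OF mult_carrier_mat[OF Z mat_adjoint_carrier[OF Z]] Z mat_adjoint_carrier[OF Z]]
      mult_adjoint_self_mult[OF Z ZZ] by simp
  moreover have "(Z * mat_adjoint Z * (Z * mat_adjoint Z)) $$ (a, b)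
      = (\<Sum>m<n. (Z * mat_adjoint Z) $$ (a, m) * (Z * mat_adjoint Z) $$ (m, b))"
    using Z ab by (subst index_mult_mat_sum) auto
  ultimately show "(\<Sum>m<n. (Z * mat_adjoint Z) $$ (a, m) * (Z * mat_adjoint Z) $$ (m, b))
      = (Z * mat_adjoint Z) $$ (a, b)" by simp
qed

lemma Re_diag_mult_adjoint_self:
  assumes "Z \<in> carrier_mat n p" "i < n"
  shows "Re ((Z * mat_adjoint Z) $$ (i, i)) = (\<Sum>m<p. (cmod (Z $$ (i, m)))\<^sup>2)"
proof -
  have "(Z * mat_adjoint Z) $$ (i, i) = complex_of_real (\<Sum>m<p. (cmod (Z $$ (i, m)))\<^sup>2)"
    by (simp only: index_mult_adjoint_self[OF assms(1,2,2)] of_real_sum complex_norm_square)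
  then show ?thesis by simp
qed

lemma row_norm_le_one:
  assumes Z: "Z \<in> carrier_mat n p" and ZZ: "mat_adjoint Z * Z = 1\<^sub>m p" and i: "i < n"
  shows "(\<Sum>m<p. (cmod (Z $$ (i, m)))\<^sup>2) \<le> 1"
  using orth_projection.diag_le_one[OF orth_projection_mult_adjoint_self[OF Z ZZ] i]
    Re_diag_mult_adjoint_self[OF Z i] by simp

text \<open>Rows of full norm are fixed by the projection; on the remaining rows the hypothesis
  forces every column to live inside a single level set of g.\<close>

lemma mult_adjoint_self_eq_zero_across_levels:
  assumes Z: "Z \<in> carrier_mat n p" and ZZ: "mat_adjoint Z * Z = 1\<^sub>m p"
    and level: "\<And>i m. i < n \<Longrightarrow> m < p \<Longrightarrow> (\<Sum>m<p. (cmod (Z $$ (i, m)))\<^sup>2) < 1 \<Longrightarrow>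
                  Z $$ (i, m) \<noteq> 0 \<Longrightarrow> g i = h m"
    and ij: "i < n" "j < n" and ne: "g i \<noteq> g j"
  shows "(Z * mat_adjoint Z) $$ (i, j) = 0"
proof -
  let ?P = "\<lambda>a b. (Z * mat_adjoint Z) $$ (a, b)"
  interpret orth_projection n ?P by (rule orth_projection_mult_adjoint_self[OF Z ZZ])
  have "i \<noteq> j" using ne by auto
  consider "Re (?P j j) = 1" | "Re (?P i i) = 1" | "Re (?P i i) < 1" "Re (?P j j) < 1"
    using diag_le_one ij by fastforce
  then show ?thesis
  proof cases
    case 1
    then show ?thesis using col_eq_unit_if_diag_one[OF ij(2) _ ij(1)] \<open>i \<noteq> j\<close> by simp
  next
    case 2
    then show ?thesis using col_eq_unit_if_diag_one[OF ij(1) _ ij(2)] \<open>i \<noteq> j\<close> hermitian[OF ij] by simp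
  next
    case 3
    have "Z $$ (i, m) * cnj (Z $$ (j, m)) = 0" if "m < p" for m
    proof (rule ccontr)
      assume "Z $$ (i, m) * cnj (Z $$ (j, m)) \<noteq> 0"
      then have "g i = h m" "g j = h m"
        using level[OF ij(1) that] level[OF ij(2) that] 3
        unfolding Re_diag_mult_adjoint_self[OF Z ij(1)] Re_diag_mult_adjoint_self[OF Z ij(2)] by auto
      then show False using ne by simp
    qed
    then show ?thesis by (simp add: index_mult_adjoint_self[OF Z ij] sum.neutral)
  qed
qed

section \<open>Weighted sums against substochastic matrices\<close>

lemma sum_lessThan_add:
  fixes a b :: nat
  shows "(\<Sum>j<a + b. f j) = (\<Sum>j<a. f j) + (\<Sum>t<b. f (a + t))"
  by (induction b) (auto simp: add.assoc)

lemma abel_weighted_sum_nonneg: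
  fixes w x :: "nat \<Rightarrow> real"
  assumes "\<And>m. m < q \<Longrightarrow> 0 \<le> (\<Sum>j<Suc m. x j)"
    and "\<And>i j. i \<le> j \<Longrightarrow> j < q \<Longrightarrow> w j \<le> w i"
    and "\<And>j. j < q \<Longrightarrow> 0 \<le> w j"
  shows "0 \<le> (\<Sum>j<q. w j * x j)"
  using assms
proof (induction q arbitrary: w)
  case 0
  then show ?case by simp
next
  case (Suc q)
  have "(\<Sum>j<Suc q. w j * x j) = (\<Sum>j<q. (w j - w q) * x j) + w q * (\<Sum>j<Suc q. x j)"
    by (simp add: algebra_simps sum.distrib sum_distrib_left sum_subtractf)
  moreover have "0 \<le> (\<Sum>j<q. (w j - w q) * x j)"
    by (rule Suc.IH) (use Suc.prems in auto)
  moreover have "0 \<le> w q * (\<Sum>j<Suc q. x j)"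
    using Suc.prems by auto
  ultimately show ?case by linarith
qed

text \<open>If the weights drop strictly after position m, lowering the first m + 1 weights by
  the size e of that drop keeps them admissible, which leaves e times the (m + 1)-st
  partial sum as the only slack.\<close>

lemma abel_weighted_sum_zero_imp:
  fixes w x :: "nat \<Rightarrow> real"
  assumes ps: "\<And>m. m < q \<Longrightarrow> 0 \<le> (\<Sum>j<Suc m. x j)"
    and dec: "\<And>i j. i \<le> j \<Longrightarrow> j < q \<Longrightarrow> w j \<le> w i"
    and nn: "\<And>j. j < q \<Longrightarrow> 0 \<le> w j"
    and m: "m < q" and gap: "(if Suc m < q then w (Suc m) else 0) < w m"
    and eq: "(\<Sum>j<q. w j * x j) = 0"
  shows "(\<Sum>j<Suc m. x j) = 0"
proof -
  define e where "e = w m - (if Suc m < q then w (Suc m) else 0)"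
  define w' where "w' j = (if j \<le> m then w j - e else w j)" for j
  have "0 \<le> (\<Sum>j<q. w' j * x j)"
  proof (rule abel_weighted_sum_nonneg[OF ps])
    show "w' j \<le> w' i" if "i \<le> j" "j < q" for i j
      using that dec[of i j] dec[of i m] dec[of "Suc m" j] m
      unfolding w'_def e_def by (auto split: if_splits)
    show "0 \<le> w' j" if "j < q" for j
      using that dec[of j m] nn[of j] nn[of "Suc m"] m
      unfolding w'_def e_def by (auto split: if_splits)
  qed
  moreover have "(\<Sum>j<q. w j * x j) = (\<Sum>j<q. w' j * x j) + e * (\<Sum>j<Suc m. x j)"
  proof -
    have "(\<Sum>j<q. w j * x j) = (\<Sum>j<q. w' j * x j + (if j \<le> m then e * x j else 0))"
      by (rule sum.cong) (auto simp: w'_def algebra_simps)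
    also have "\<dots> = (\<Sum>j<q. w' j * x j) + (\<Sum>j<q. if j \<le> m then e * x j else 0)"
      by (rule sum.distrib)
    also have "(\<Sum>j<q. if j \<le> m then e * x j else 0) = (\<Sum>j\<in>{..<q} \<inter> {..m}. e * x j)"
      by (simp add: sum.inter_restrict atMost_def)
    also have "{..<q} \<inter> {..m} = {..<Suc m}" using m by auto
    finally show ?thesis by (simp add: sum_distrib_left[symmetric] distrib_left)
  qed
  moreover have "0 < e" using gap e_def by simp
  ultimately have "(\<Sum>j<Suc m. x j) \<le> 0" using eq by (smt (verit) mult_pos_pos)
  with ps[OF m] show ?thesis by linarith
qed

context
  fixes lam w :: "nat \<Rightarrow> real" and n m :: nat
  assumes sorted: "\<And>i j. i \<le> j \<Longrightarrow> j < n \<Longrightarrow> lam i \<le> lam j"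
    and w_bounds: "\<And>i. i < n \<Longrightarrow> 0 \<le> w i \<and> w i \<le> 1"
    and sum_w: "(\<Sum>i<n. w i) = real m" and m_le: "m \<le> n"
begin

lemma weighted_sum_minus_sum_smallest:
  "(\<Sum>i<n. lam i * w i) - (\<Sum>i<m. lam i)
    = (\<Sum>i<n. (lam i - lam (m - 1)) * (w i - (if i < m then 1 else 0)))"
proof -
  have restrict: "{..<n} \<inter> {i. i < m} = {..<m}" using m_le by auto
  have "(\<Sum>i<n. lam i * (if i < m then 1 else 0)) = (\<Sum>i<m. lam i)"
    using sum.inter_restrict[of "{..<n}" lam "{i. i < m}"] by (simp add: restrict if_distrib cong: if_cong)
  moreover have "(\<Sum>i<n. (if i < m then 1 else 0)) = real m"
    using sum.inter_restrict[of "{..<n}" "\<lambda>_. 1::real" "{i. i < m}"] by (simp add: restrict)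
  moreover have "(\<Sum>i<n. (lam i - c) * (w i - (if i < m then 1 else 0)))
      = (\<Sum>i<n. lam i * w i) - (\<Sum>i<n. lam i * (if i < m then 1 else 0))
        - c * ((\<Sum>i<n. w i) - (\<Sum>i<n. (if i < m then 1 else 0)))" for c
    by (simp add: algebra_simps sum.distrib sum_subtractf sum_distrib_left)
  ultimately show ?thesis using sum_w by simp
qed

lemma weighted_sum_gap_term_nonneg:
  assumes i: "i < n"
  shows "0 \<le> (lam i - lam (m - 1)) * (w i - (if i < m then 1 else 0))"
proof (cases "i < m")
  case True
  then show ?thesis using sorted[of i "m - 1"] w_bounds[OF i] m_le by (simp add: mult_nonpos_nonpos)
next
  case False
  then show ?thesis using sorted[of "m - 1" i] w_bounds[OF i] i by simp
qed

lemma sum_smallest_le_weighted_sum: "(\<Sum>i<m. lam i) \<le> (\<Sum>i<n. lam i * w i)"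
proof -
  have "0 \<le> (\<Sum>i<n. (lam i - lam (m - 1)) * (w i - (if i < m then 1 else 0)))"
    using weighted_sum_gap_term_nonneg by (intro sum_nonneg) simp
  then show ?thesis using weighted_sum_minus_sum_smallest by simp
qed

lemma weighted_sum_eq_sum_smallest_imp:
  assumes eq: "(\<Sum>i<m. lam i) = (\<Sum>i<n. lam i * w i)" and i: "i < n"
  shows "(lam i < lam (m - 1) \<longrightarrow> w i = 1) \<and> (lam (m - 1) < lam i \<longrightarrow> w i = 0)"
proof -
  have "(\<Sum>i<n. (lam i - lam (m - 1)) * (w i - (if i < m then 1 else 0))) = 0"
    using weighted_sum_minus_sum_smallest eq by simp
  then have "(lam i - lam (m - 1)) * (w i - (if i < m then 1 else 0)) = 0"
    using i weighted_sum_gap_term_nonneg by (subst (asm) sum_nonneg_eq_0_iff) auto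
  moreover have "i < m" if "lam i < lam (m - 1)"
    using that sorted[of "m - 1" i] i by (cases "m - 1 \<le> i") auto
  moreover have "\<not> i < m" if "lam (m - 1) < lam i"
  proof
    assume "i < m"
    then have "lam i \<le> lam (m - 1)" using sorted[of i "m - 1"] m_le by simp
    then show False using that by simp
  qed
  ultimately show ?thesis by auto
qed

end

lemma card_level_le_sum_weights:
  fixes g w :: "nat \<Rightarrow> real" and J :: "nat set"
  assumes J: "J \<subseteq> {..<n}" and w01: "\<And>i. i < n \<Longrightarrow> 0 \<le> w i \<and> w i \<le> 1"
    and sum_w: "(\<Sum>i<n. w i) = real (card J)"
    and below: "\<And>i. i < n \<Longrightarrow> g i < t \<Longrightarrow> w i = 1 \<and> i \<in> J"
    and above: "\<And>i. i < n \<Longrightarrow> t < g i \<Longrightarrow> w i = 0"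
    and J_le: "\<And>j. j \<in> J \<Longrightarrow> g j \<le> t"
  shows "real (card {j \<in> J. g j = c}) \<le> (\<Sum>i | i < n \<and> g i = c. w i)"
proof -
  have finJ: "finite J" using J finite_subset by blast
  consider "c < t" | "c = t" | "t < c" by linarith
  then show ?thesis
  proof cases
    case 1
    have "card {j \<in> J. g j = c} \<le> card {i. i < n \<and> g i = c}"
      by (rule card_mono) (use J in auto)
    moreover have "(\<Sum>i | i < n \<and> g i = c. w i) = real (card {i. i < n \<and> g i = c})"
      using below 1 by simp
    ultimately show ?thesis by simp
  next
    case 3
    then have "{j \<in> J. g j = c} = {}" using J_le by force
    moreover have "0 \<le> (\<Sum>i | i < n \<and> g i = c. w i)" using w01 by (intro sum_nonneg) auto
    ultimately show ?thesis by (simp only: card.empty of_nat_0)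
  next
    case 2
    define K where "K = {i. i < n \<and> g i < t}"
    define L where "L = {i. i < n \<and> g i = t}"
    define G where "G = {i. i < n \<and> t < g i}"
    have "{..<n} = (K \<union> L) \<union> G" unfolding K_def L_def G_def by auto
    moreover have "finite K" "finite L" "finite G" "K \<inter> L = {}" "(K \<union> L) \<inter> G = {}"
      unfolding K_def L_def G_def by auto
    ultimately have "(\<Sum>i<n. w i) = (\<Sum>i\<in>K. w i) + (\<Sum>i\<in>L. w i) + (\<Sum>i\<in>G. w i)"
      by (simp add: sum.union_disjoint)
    moreover have "(\<Sum>i\<in>K. w i) = real (card K)" using below unfolding K_def by simp
    moreover have "(\<Sum>i\<in>G. w i) = 0" using above unfolding G_def by simp
    ultimately have sum_L: "(\<Sum>i\<in>L. w i) = real (card J) - real (card K)" using sum_w by simp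
    have KJ: "K \<subseteq> J" using below unfolding K_def by auto
    have "card {j \<in> J. g j = c} \<le> card (J - K)"
      by (rule card_mono) (use finJ 2 in \<open>auto simp: K_def\<close>)
    also have "card (J - K) = card J - card K"
      by (rule card_Diff_subset[OF finite_subset[OF KJ finJ] KJ])
    finally show ?thesis
      using sum_L 2 card_mono[OF finJ KJ] unfolding L_def by simp
  qed
qed

locale sorted_substochastic =
  fixes n q :: nat and lam :: "nat \<Rightarrow> real" and p :: "nat \<Rightarrow> nat \<Rightarrow> real"
  assumes sorted: "\<And>i j. i \<le> j \<Longrightarrow> j < n \<Longrightarrow> lam i \<le> lam j"
    and q_le: "q \<le> n"
    and nonneg: "\<And>i j. i < n \<Longrightarrow> j < q \<Longrightarrow> 0 \<le> p i j"
    and col_sum: "\<And>j. j < q \<Longrightarrow> (\<Sum>i<n. p i j) = 1"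
    and row_sum: "\<And>i. i < n \<Longrightarrow> (\<Sum>j<q. p i j) \<le> 1"
begin

definition mass :: "nat \<Rightarrow> nat \<Rightarrow> real" where
  "mass m i = (\<Sum>j<m. p i j)"

definition mix :: "nat \<Rightarrow> real" where
  "mix j = (\<Sum>i<n. lam i * p i j)"

lemma mass_bounds:
  assumes "m \<le> q" "i < n"
  shows "0 \<le> mass m i \<and> mass m i \<le> 1"
proof
  show "0 \<le> mass m i" unfolding mass_def using nonneg assms by (auto intro: sum_nonneg)
  have "mass m i \<le> (\<Sum>j<q. p i j)" unfolding mass_def
    by (rule sum_mono2) (use assms nonneg in auto)
  then show "mass m i \<le> 1" using row_sum[OF assms(2)] by linarith
qed

lemma sum_mass:
  assumes "m \<le> q"
  shows "(\<Sum>i<n. mass m i) = real m"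
proof -
  have "(\<Sum>i<n. mass m i) = (\<Sum>j<m. \<Sum>i<n. p i j)" unfolding mass_def by (rule sum.swap)
  also have "\<dots> = (\<Sum>j<m. 1)" by (rule sum.cong) (use assms col_sum in auto)
  finally show ?thesis by simp
qed

lemma sum_mix: "(\<Sum>j<m. mix j) = (\<Sum>i<n. lam i * mass m i)"
proof -
  have "(\<Sum>j<m. mix j) = (\<Sum>i<n. \<Sum>j<m. lam i * p i j)" unfolding mix_def by (rule sum.swap)
  then show ?thesis by (simp add: mass_def sum_distrib_left)
qed

lemma partial_sum_le:
  assumes "m \<le> q"
  shows "(\<Sum>j<m. lam j) \<le> (\<Sum>j<m. mix j)"
  unfolding sum_mix
  by (rule sum_smallest_le_weighted_sum[of n lam "mass m"])
    (use assms q_le sorted mass_bounds sum_mass in auto)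

lemma partial_sum_eq_imp:
  assumes "m \<le> q" "(\<Sum>j<m. lam j) = (\<Sum>j<m. mix j)" "i < n"
  shows "(lam i < lam (m - 1) \<longrightarrow> mass m i = 1) \<and> (lam (m - 1) < lam i \<longrightarrow> mass m i = 0)"
  by (rule weighted_sum_eq_sum_smallest_imp[of n lam "mass m"])
    (use assms q_le sorted mass_bounds sum_mass sum_mix in auto)

lemma weighted_lower_bound:
  assumes dec: "\<And>i j. i \<le> j \<Longrightarrow> j < q \<Longrightarrow> w j \<le> w i" and nn: "\<And>j. j < q \<Longrightarrow> 0 \<le> w j"
  shows "(\<Sum>j<q. w j * lam j) \<le> (\<Sum>j<q. w j * mix j)"
proof -
  have "0 \<le> (\<Sum>j<Suc m. mix j - lam j)" if "m < q" for m
    using partial_sum_le[of "Suc m"] that by (simp only: sum_subtractf) simp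
  then have "0 \<le> (\<Sum>j<q. w j * (mix j - lam j))"
    by (rule abel_weighted_sum_nonneg[OF _ dec nn])
  then show ?thesis by (simp add: algebra_simps sum_subtractf)
qed

lemma partial_sum_eq_of_weighted_eq:
  assumes dec: "\<And>i j. i \<le> j \<Longrightarrow> j < q \<Longrightarrow> w j \<le> w i" and nn: "\<And>j. j < q \<Longrightarrow> 0 \<le> w j"
    and eq: "(\<Sum>j<q. w j * lam j) = (\<Sum>j<q. w j * mix j)"
    and m: "m < q" and gap: "(if Suc m < q then w (Suc m) else 0) < w m"
  shows "(\<Sum>j<Suc m. lam j) = (\<Sum>j<Suc m. mix j)"
proof -
  have ps: "0 \<le> (\<Sum>j<Suc m. mix j - lam j)" if "m < q" for m
    using partial_sum_le[of "Suc m"] that by (simp only: sum_subtractf) simp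
  have "(\<Sum>j<q. w j * (mix j - lam j)) = 0"
    using eq by (simp add: right_diff_distrib sum_subtractf)
  then have "(\<Sum>j<Suc m. mix j - lam j) = 0"
    using abel_weighted_sum_zero_imp[OF ps dec nn m gap] by blast
  then show ?thesis by (metis eq_iff_diff_eq_0 sum_subtractf)
qed

lemma mass_of_weighted_eq:
  assumes dec: "\<And>i j. i \<le> j \<Longrightarrow> j < q \<Longrightarrow> w j \<le> w i" and nn: "\<And>j. j < q \<Longrightarrow> 0 \<le> w j"
    and eq: "(\<Sum>j<q. w j * lam j) = (\<Sum>j<q. w j * mix j)"
    and q: "0 < q" and last_pos: "0 < w (q - 1)" and i: "i < n"
  shows "(lam i < lam (q - 1) \<longrightarrow> mass q i = 1) \<and> (lam (q - 1) < lam i \<longrightarrow> mass q i = 0)"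
proof -
  have "(\<Sum>j<Suc (q - 1). lam j) = (\<Sum>j<Suc (q - 1). mix j)"
    by (rule partial_sum_eq_of_weighted_eq[OF dec nn eq]) (use q last_pos in auto)
  then show ?thesis using partial_sum_eq_imp[OF order_refl _ i] q by simp
qed

lemma support_of_weighted_eq:
  assumes dec: "\<And>i j. i \<le> j \<Longrightarrow> j < q \<Longrightarrow> w j \<le> w i" and nn: "\<And>j. j < q \<Longrightarrow> 0 \<le> w j"
    and eq: "(\<Sum>j<q. w j * lam j) = (\<Sum>j<q. w j * mix j)"
    and strict: "\<And>i j. i < j \<Longrightarrow> j < q \<Longrightarrow> w j < w i" and pos: "\<And>j. j < q \<Longrightarrow> 0 < w j"
    and i: "i < n" and j: "j < q" and ne: "lam i \<noteq> lam j"
  shows "p i j = 0"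
proof -
  have partial_eq: "(\<Sum>j<Suc m. lam j) = (\<Sum>j<Suc m. mix j)" if "m < q" for m
    by (rule partial_sum_eq_of_weighted_eq[OF dec nn eq that]) (use strict pos that in auto)
  have mix_j: "mix j = lam j"
  proof (cases j)
    case 0
    then show ?thesis using partial_eq[of 0] j by simp
  next
    case (Suc j')
    then show ?thesis using partial_eq[of j] partial_eq[of j'] j by simp
  qed
  have "mass (Suc j) i' = 0" if "i' < n" "lam j < lam i'" for i'
    using partial_sum_eq_imp[OF _ partial_eq[OF j] that(1)] that j by simp
  then have above: "p i' j = 0" if "i' < n" "lam j < lam i'" for i'
    using that nonneg[OF that(1)] j sum_nonneg_eq_0_iff[of "{..<Suc j}" "p i'"]
    unfolding mass_def by simp
  \<comment> \<open>column j has mass 1 and mean mix j = lam j, but no mass above lam j\<close>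
  have "(\<Sum>i<n. (lam j - lam i) * p i j) = lam j * (\<Sum>i<n. p i j) - mix j"
    unfolding mix_def by (simp add: algebra_simps sum_subtractf sum_distrib_left)
  also have "\<dots> = 0" using col_sum[OF j] mix_j by simp
  moreover have "0 \<le> (lam j - lam i') * p i' j" if "i' < n" for i'
    using above[OF that] nonneg[OF that j] by (cases "lam j < lam i'") auto
  ultimately have "(lam j - lam i) * p i j = 0"
    using i sum_nonneg_eq_0_iff[of "{..<n}" "\<lambda>i. (lam j - lam i) * p i j"] by simp
  then show ?thesis using ne above[OF i] by auto
qed

lemma card_level_le_mass:
  assumes lo: "\<And>i. i < n \<Longrightarrow> lam i < lam (q - 1) \<Longrightarrow> mass q i = 1"
    and hi: "\<And>i. i < n \<Longrightarrow> lam (q - 1) < lam i \<Longrightarrow> mass q i = 0"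
  shows "real (card {j. j < q \<and> lam j = c}) \<le> (\<Sum>i | i < n \<and> lam i = c. mass q i)"
proof (cases "q = 0")
  case True
  then show ?thesis by (simp add: mass_def)
next
  case False
  have "real (card {j \<in> {..<q}. lam j = c}) \<le> (\<Sum>i | i < n \<and> lam i = c. mass q i)"
  proof (rule card_level_le_sum_weights[where t = "lam (q - 1)"])
    show "{..<q} \<subseteq> {..<n}" using q_le by auto
    show "0 \<le> mass q i \<and> mass q i \<le> 1" if "i < n" for i using mass_bounds[OF order_refl that] .
    show "(\<Sum>i<n. mass q i) = real (card {..<q})" using sum_mass[OF order_refl] by simp
    show "mass q i = 0" if "i < n" "lam (q - 1) < lam i" for i using hi[OF that] .
    show "mass q i = 1 \<and> i \<in> {..<q}" if "i < n" "lam i < lam (q - 1)" for i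
      using lo[OF that] that sorted[of "q - 1" i] by (cases "q - 1 \<le> i") auto
    show "lam j \<le> lam (q - 1)" if "j \<in> {..<q}" for j
      using that sorted[of j "q - 1"] q_le by auto
  qed
  then show ?thesis by simp
qed

lemma card_level_top_le_mass:
  assumes lo: "\<And>i. i < n \<Longrightarrow> lam (n - q) < lam i \<Longrightarrow> mass q i = 1"
    and hi: "\<And>i. i < n \<Longrightarrow> lam i < lam (n - q) \<Longrightarrow> mass q i = 0"
  shows "real (card {t. t < q \<and> lam (n - q + t) = c}) \<le> (\<Sum>i | i < n \<and> lam i = c. mass q i)"
proof (cases "q = 0")
  case True
  then show ?thesis by (simp add: mass_def)
next
  case False
  have "real (card {j \<in> {n - q..<n}. - lam j = - c}) \<le> (\<Sum>i | i < n \<and> - lam i = - c. mass q i)"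
  proof (rule card_level_le_sum_weights[where t = "- lam (n - q)"])
    show "{n - q..<n} \<subseteq> {..<n}" by auto
    show "0 \<le> mass q i \<and> mass q i \<le> 1" if "i < n" for i using mass_bounds[OF order_refl that] .
    show "(\<Sum>i<n. mass q i) = real (card {n - q..<n})" using sum_mass[OF order_refl] q_le by simp
    show "mass q i = 0" if "i < n" "- lam (n - q) < - lam i" for i using hi[of i] that by simp
    show "mass q i = 1 \<and> i \<in> {n - q..<n}" if "i < n" "- lam i < - lam (n - q)" for i
      using lo[of i] that sorted[of i "n - q"] \<open>q \<noteq> 0\<close> by (cases "n - q \<le> i") auto
    show "- lam j \<le> - lam (n - q)" if "j \<in> {n - q..<n}" for j
      using that sorted[of "n - q" j] by auto
  qed
  moreover have "card {t. t < q \<and> lam (n - q + t) = c} \<le> card {j \<in> {n - q..<n}. - lam j = - c}"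
  proof (rule card_inj_on_le[where f = "\<lambda>t. n - q + t"])
    show "inj_on (\<lambda>t. n - q + t) {t. t < q \<and> lam (n - q + t) = c}" by (simp add: inj_on_def)
    show "(\<lambda>t. n - q + t) ` {t. t < q \<and> lam (n - q + t) = c} \<subseteq> {j \<in> {n - q..<n}. - lam j = - c}"
      using q_le by auto
  qed simp
  ultimately show ?thesis by simp
qed

text \<open>Statements about the q largest eigenvalues follow by applying the above to the
  reversed and negated spectrum, with rows and columns of p reversed.\<close>

lemma reflected:
  "sorted_substochastic n q (\<lambda>i. - lam (n - Suc i)) (\<lambda>i t. p (n - Suc i) (q - Suc t))"
proof unfold_locales
  show "- lam (n - Suc i) \<le> - lam (n - Suc j)" if "i \<le> j" "j < n" for i j
    using sorted[of "n - Suc j" "n - Suc i"] that by simp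
  show "(\<Sum>i<n. p (n - Suc i) (q - Suc t)) = 1" if "t < q" for t
    using sum.nat_diff_reindex[of "\<lambda>i. p i (q - Suc t)" n] col_sum[of "q - Suc t"] that by simp
  show "(\<Sum>t<q. p (n - Suc i) (q - Suc t)) \<le> 1" if "i < n" for i
    using sum.nat_diff_reindex[of "\<lambda>t. p (n - Suc i) t" q] row_sum[of "n - Suc i"] that by simp
qed (use q_le nonneg in auto)

lemma mix_reflected:
  "sorted_substochastic.mix n (\<lambda>i. - lam (n - Suc i)) (\<lambda>i t. p (n - Suc i) (q - Suc t)) t
    = - mix (q - Suc t)"
  unfolding sorted_substochastic.mix_def[OF reflected] mix_def
  using sum.nat_diff_reindex[of "\<lambda>i. lam i * p i (q - Suc t)" n] by (simp add: sum_negf)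

lemma mass_reflected:
  "i < n \<Longrightarrow> sorted_substochastic.mass (\<lambda>i t. p (n - Suc i) (q - Suc t)) q (n - Suc i) = mass q i"
  unfolding sorted_substochastic.mass_def[OF reflected] mass_def
  using sum.nat_diff_reindex[of "\<lambda>t. p i t" q] by simp

lemma reflected_weighted_sums:
  "(\<Sum>t<q. - w (q - Suc t) * - lam (n - Suc t)) = (\<Sum>j<q. w j * lam (n - q + j))"
  "(\<Sum>t<q. - w (q - Suc t) * sorted_substochastic.mix n (\<lambda>i. - lam (n - Suc i))
      (\<lambda>i t. p (n - Suc i) (q - Suc t)) t) = (\<Sum>j<q. w j * mix j)"
proof -
  have "(\<Sum>t<q. - w (q - Suc t) * - lam (n - Suc t))
      = (\<Sum>t<q. (\<lambda>j. w j * lam (n - q + j)) (q - Suc t))"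
    by (rule sum.cong) (use q_le in \<open>auto intro!: arg_cong[where f=lam]\<close>)
  also have "\<dots> = (\<Sum>j<q. w j * lam (n - q + j))" by (rule sum.nat_diff_reindex)
  finally show "(\<Sum>t<q. - w (q - Suc t) * - lam (n - Suc t)) = (\<Sum>j<q. w j * lam (n - q + j))" .
  show "(\<Sum>t<q. - w (q - Suc t) * sorted_substochastic.mix n (\<lambda>i. - lam (n - Suc i))
      (\<lambda>i t. p (n - Suc i) (q - Suc t)) t) = (\<Sum>j<q. w j * mix j)"
    unfolding mix_reflected using sum.nat_diff_reindex[of "\<lambda>j. w j * mix j" q] by simp
qed

lemma weighted_lower_bound_top:
  assumes dec: "\<And>i j. i \<le> j \<Longrightarrow> j < q \<Longrightarrow> w j \<le> w i" and np: "\<And>j. j < q \<Longrightarrow> w j \<le> 0"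
  shows "(\<Sum>j<q. w j * lam (n - q + j)) \<le> (\<Sum>j<q. w j * mix j)"
proof -
  interpret flip: sorted_substochastic n q "\<lambda>i. - lam (n - Suc i)" "\<lambda>i t. p (n - Suc i) (q - Suc t)"
    by (rule reflected)
  show ?thesis
    using flip.weighted_lower_bound[of "\<lambda>t. - w (q - Suc t)"] dec np
    unfolding reflected_weighted_sums by force
qed

lemma mass_of_weighted_eq_top:
  assumes dec: "\<And>i j. i \<le> j \<Longrightarrow> j < q \<Longrightarrow> w j \<le> w i" and np: "\<And>j. j < q \<Longrightarrow> w j \<le> 0"
    and eq: "(\<Sum>j<q. w j * lam (n - q + j)) = (\<Sum>j<q. w j * mix j)"
    and q: "0 < q" and first_neg: "w 0 < 0" and i: "i < n"
  shows "(lam (n - q) < lam i \<longrightarrow> mass q i = 1) \<and> (lam i < lam (n - q) \<longrightarrow> mass q i = 0)"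
proof -
  interpret flip: sorted_substochastic n q "\<lambda>i. - lam (n - Suc i)" "\<lambda>i t. p (n - Suc i) (q - Suc t)"
    by (rule reflected)
  have "n - Suc (n - Suc i) = i" "n - Suc (q - 1) = n - q" using i q q_le by auto
  then show ?thesis
    using flip.mass_of_weighted_eq[of "\<lambda>t. - w (q - Suc t)" "n - Suc i"] dec np eq q first_neg i
    unfolding reflected_weighted_sums mass_reflected[OF i] by force
qed

lemma support_of_weighted_eq_top:
  assumes dec: "\<And>i j. i \<le> j \<Longrightarrow> j < q \<Longrightarrow> w j \<le> w i" and np: "\<And>j. j < q \<Longrightarrow> w j \<le> 0"
    and eq: "(\<Sum>j<q. w j * lam (n - q + j)) = (\<Sum>j<q. w j * mix j)"
    and strict: "\<And>i j. i < j \<Longrightarrow> j < q \<Longrightarrow> w j < w i" and neg: "\<And>j. j < q \<Longrightarrow> w j < 0"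
    and i: "i < n" and j: "j < q" and ne: "lam i \<noteq> lam (n - q + j)"
  shows "p i j = 0"
proof -
  interpret flip: sorted_substochastic n q "\<lambda>i. - lam (n - Suc i)" "\<lambda>i t. p (n - Suc i) (q - Suc t)"
    by (rule reflected)
  have "n - Suc (n - Suc i) = i" "q - Suc (q - Suc j) = j" "n - Suc (q - Suc j) = n - q + j"
    using i j q_le by auto
  then show ?thesis
    using flip.support_of_weighted_eq[of "\<lambda>t. - w (q - Suc t)" "n - Suc i" "q - Suc j"]
      dec np eq strict neg i j ne
    unfolding reflected_weighted_sums by force
qed

end

section \<open>The diagonal problem\<close>

locale signed_weights =
  fixes n q r :: nat and lam w :: "nat \<Rightarrow> real"
  assumes qr_le: "q + r \<le> n"
    and lam_sorted: "\<And>i j. i \<le> j \<Longrightarrow> j < n \<Longrightarrow> lam i \<le> lam j"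
    and w_sorted: "\<And>i j. i \<le> j \<Longrightarrow> j < q + r \<Longrightarrow> w j \<le> w i"
    and w_pos: "\<And>j. j < q \<Longrightarrow> 0 < w j"
    and w_neg: "\<And>j. q \<le> j \<Longrightarrow> j < q + r \<Longrightarrow> w j < 0"
begin

definition extreme_eig :: "nat \<Rightarrow> real" where
  "extreme_eig j = (if j < q then lam j else lam (j + n - (q + r)))"

definition objective :: "complex mat \<Rightarrow> real" where
  "objective Z = (\<Sum>j<q + r. w j * (\<Sum>i<n. lam i * (cmod (Z $$ (i, j)))\<^sup>2))"

definition optimum :: real where
  "optimum = (\<Sum>j<q + r. w j * extreme_eig j)"

lemma optimum_split:
  "optimum = (\<Sum>j<q. w j * lam j) + (\<Sum>t<r. w (q + t) * lam (n - r + t))"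
  unfolding optimum_def sum_lessThan_add extreme_eig_def using qr_le
  by (simp add: add.commute add.left_commute)

lemma extreme_eig_attained: "j < q + r \<Longrightarrow> \<exists>i<n. lam i = extreme_eig j"
  unfolding extreme_eig_def using qr_le
  by (cases "j < q") (auto intro: exI[of _ j] exI[of _ "j + n - (q + r)"])

definition level :: "real \<Rightarrow> nat set" where
  "level c = {i. i < n \<and> lam i = c}"

lemma level_extreme_eig_eq_iff:
  assumes "j' < q + r"
  shows "level (extreme_eig j') = level (extreme_eig j) \<longleftrightarrow> extreme_eig j' = extreme_eig j"
proof
  assume eq: "level (extreme_eig j') = level (extreme_eig j)"
  obtain i where i: "i < n" "lam i = extreme_eig j'" using extreme_eig_attained[OF assms] by blast
  then have "i \<in> level (extreme_eig j)" using eq unfolding level_def by blast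
  then show "extreme_eig j' = extreme_eig j" using i(2) unfolding level_def by simp
qed simp

lemma card_extreme_eig_le:
  "card {j. j < q + r \<and> extreme_eig j = c}
    \<le> card {j. j < q \<and> lam j = c} + card {t. t < r \<and> lam (n - r + t) = c}"
proof -
  let ?A = "{j. j < q \<and> lam j = c}" and ?B = "{t. t < r \<and> lam (n - r + t) = c}"
  have "{j. j < q + r \<and> extreme_eig j = c} \<subseteq> ?A \<union> (\<lambda>t. q + t) ` ?B"
  proof
    fix j assume j: "j \<in> {j. j < q + r \<and> extreme_eig j = c}"
    show "j \<in> ?A \<union> (\<lambda>t. q + t) ` ?B"
    proof (cases "j < q")
      case False
      then have "j = q + (j - q)" "j - q < r" "j + n - (q + r) = n - r + (j - q)"
        using j qr_le by auto
      then show ?thesis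
        using j False unfolding extreme_eig_def by (intro UnI2 image_eqI[where x = "j - q"]) auto
    qed (use j in \<open>simp add: extreme_eig_def\<close>)
  qed
  then have "card {j. j < q + r \<and> extreme_eig j = c} \<le> card (?A \<union> (\<lambda>t. q + t) ` ?B)"
    by (rule card_mono[rotated]) simp
  also have "\<dots> \<le> card ?A + card ((\<lambda>t. q + t) ` ?B)" by (rule card_Un_le)
  also have "\<dots> \<le> card ?A + card ?B" using card_image_le[of ?B "\<lambda>t. q + t"] by simp
  finally show ?thesis .
qed

end

locale signed_weights_frame = signed_weights +
  fixes Z :: "complex mat"
  assumes Z: "Z \<in> carrier_mat n (q + r)"
    and orthonormal: "mat_adjoint Z * Z = 1\<^sub>m (q + r)"
begin

lemma col_norm: "j < q + r \<Longrightarrow> (\<Sum>i<n. (cmod (Z $$ (i, j)))\<^sup>2) = 1"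
  using orthonormal_cols_norm orthonormal Z unfolding adjoint_mult_self_eq_one_iff[OF Z] by blast

lemma row_norm_split:
  "(\<Sum>m<q + r. (cmod (Z $$ (i, m)))\<^sup>2)
    = (\<Sum>j<q. (cmod (Z $$ (i, j)))\<^sup>2) + (\<Sum>t<r. (cmod (Z $$ (i, q + t)))\<^sup>2)"
  by (rule sum_lessThan_add)

sublocale pos: sorted_substochastic n q lam "\<lambda>i j. (cmod (Z $$ (i, j)))\<^sup>2"
proof
  show "(\<Sum>i<n. (cmod (Z $$ (i, j)))\<^sup>2) = 1" if "j < q" for j using col_norm that by simp
  show "(\<Sum>j<q. (cmod (Z $$ (i, j)))\<^sup>2) \<le> 1" if "i < n" for i
    using row_norm_le_one[OF Z orthonormal that] row_norm_split[of i] sum_nonneg[of "{..<r}" "\<lambda>t. (cmod (Z $$ (i, q + t)))\<^sup>2"]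
    by simp
qed (use lam_sorted qr_le in auto)

sublocale neg: sorted_substochastic n r lam "\<lambda>i t. (cmod (Z $$ (i, q + t)))\<^sup>2"
proof
  show "(\<Sum>i<n. (cmod (Z $$ (i, q + t)))\<^sup>2) = 1" if "t < r" for t using col_norm that by simp
  show "(\<Sum>t<r. (cmod (Z $$ (i, q + t)))\<^sup>2) \<le> 1" if "i < n" for i
    using row_norm_le_one[OF Z orthonormal that] row_norm_split[of i] sum_nonneg[of "{..<q}" "\<lambda>j. (cmod (Z $$ (i, j)))\<^sup>2"]
    by simp
qed (use lam_sorted qr_le in auto)

lemma objective_split:
  "objective Z = (\<Sum>j<q. w j * pos.mix j) + (\<Sum>t<r. w (q + t) * neg.mix t)"
  unfolding objective_def pos.mix_def neg.mix_def by (rule sum_lessThan_add)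

lemma pos_bound: "(\<Sum>j<q. w j * lam j) \<le> (\<Sum>j<q. w j * pos.mix j)"
  by (rule pos.weighted_lower_bound) (use w_sorted w_pos in \<open>auto intro: less_imp_le\<close>)

lemma neg_bound: "(\<Sum>t<r. w (q + t) * lam (n - r + t)) \<le> (\<Sum>t<r. w (q + t) * neg.mix t)"
  by (rule neg.weighted_lower_bound_top) (use w_sorted w_neg in \<open>auto intro: less_imp_le\<close>)

theorem optimum_le_objective: "optimum \<le> objective Z"
  using pos_bound neg_bound unfolding optimum_split objective_split by linarith

end

locale signed_weights_minimizer = signed_weights_frame +
  assumes minimal: "objective Z = optimum"
begin

lemma pos_eq: "(\<Sum>j<q. w j * lam j) = (\<Sum>j<q. w j * pos.mix j)"
  and neg_eq: "(\<Sum>t<r. w (q + t) * lam (n - r + t)) = (\<Sum>t<r. w (q + t) * neg.mix t)"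
  using minimal pos_bound neg_bound unfolding optimum_split objective_split by linarith+

lemma pos_mass:
  assumes "0 < q" "i < n"
  shows "(lam i < lam (q - 1) \<longrightarrow> pos.mass q i = 1) \<and> (lam (q - 1) < lam i \<longrightarrow> pos.mass q i = 0)"
  by (rule pos.mass_of_weighted_eq[OF _ _ pos_eq]) (use assms w_sorted w_pos in \<open>auto intro: less_imp_le\<close>)

lemma neg_mass:
  assumes "0 < r" "i < n"
  shows "(lam (n - r) < lam i \<longrightarrow> neg.mass r i = 1) \<and> (lam i < lam (n - r) \<longrightarrow> neg.mass r i = 0)"
  by (rule neg.mass_of_weighted_eq_top[OF _ _ neg_eq]) (use assms w_sorted w_neg in \<open>auto intro: less_imp_le\<close>)

lemma row_norm_eq_mass: "(\<Sum>m<q + r. (cmod (Z $$ (i, m)))\<^sup>2) = pos.mass q i + neg.mass r i"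
  unfolding row_norm_split pos.mass_def neg.mass_def ..

text \<open>A row of Z of norm less than 1 is only partially captured by each block, so by the
  mass characterisation its eigenvalue sits exactly at the threshold of every block in which
  it has a nonzero entry.\<close>

lemma level_of_deficient_row:
  assumes i: "i < n" and m: "m < q + r" and deficient: "(\<Sum>m<q + r. (cmod (Z $$ (i, m)))\<^sup>2) < 1"
    and nz: "Z $$ (i, m) \<noteq> 0"
  shows "lam i = (if m < q then lam (q - 1) else lam (n - r))"
proof (cases "m < q")
  case True
  have "0 < (cmod (Z $$ (i, m)))\<^sup>2" using nz by simp
  also have "\<dots> \<le> pos.mass q i"
    unfolding pos.mass_def by (rule member_le_sum) (use True in auto)
  finally have "0 < pos.mass q i" .
  moreover have "pos.mass q i < 1"
    using deficient neg.mass_bounds[OF order_refl i] unfolding row_norm_eq_mass by linarith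
  ultimately show ?thesis using pos_mass[OF _ i] True by fastforce
next
  case False
  define t where "t = m - q"
  have t: "t < r" "m = q + t" using False m unfolding t_def by auto
  have "0 < (cmod (Z $$ (i, q + t)))\<^sup>2" using nz t by simp
  also have "\<dots> \<le> neg.mass r i"
    unfolding neg.mass_def by (rule member_le_sum[where f = "\<lambda>t. (cmod (Z $$ (i, q + t)))\<^sup>2"]) (use t in auto)
  finally have "0 < neg.mass r i" .
  moreover have "neg.mass r i < 1"
    using deficient pos.mass_bounds[OF order_refl i] unfolding row_norm_eq_mass by linarith
  ultimately show ?thesis using neg_mass[OF _ i] t False by fastforce
qed

lemma projection_level_preserving:
  "i < n \<Longrightarrow> j < n \<Longrightarrow> lam i \<noteq> lam j \<Longrightarrow> (Z * mat_adjoint Z) $$ (i, j) = 0"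
  by (rule mult_adjoint_self_eq_zero_across_levels[OF Z orthonormal level_of_deficient_row])

lemma card_extreme_level_le:
  "real (card {j. j < q + r \<and> extreme_eig j = c}) \<le> (\<Sum>i\<in>level c. Re ((Z * mat_adjoint Z) $$ (i, i)))"
proof -
  note card_extreme_eig_le[of c]
  moreover have "real (card {j. j < q \<and> lam j = c}) \<le> (\<Sum>i | i < n \<and> lam i = c. pos.mass q i)"
  proof (cases "q = 0")
    case False
    show ?thesis
    proof (rule pos.card_level_le_mass)
      show "pos.mass q i = 1" if "i < n" "lam i < lam (q - 1)" for i using pos_mass[of i] False that by simp
      show "pos.mass q i = 0" if "i < n" "lam (q - 1) < lam i" for i using pos_mass[of i] False that by simp
    qed
  qed (simp add: pos.mass_def)
  moreover have "real (card {t. t < r \<and> lam (n - r + t) = c}) \<le> (\<Sum>i | i < n \<and> lam i = c. neg.mass r i)"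
  proof (cases "r = 0")
    case False
    show ?thesis
    proof (rule neg.card_level_top_le_mass)
      show "neg.mass r i = 1" if "i < n" "lam (n - r) < lam i" for i using neg_mass[of i] False that by simp
      show "neg.mass r i = 0" if "i < n" "lam i < lam (n - r)" for i using neg_mass[of i] False that by simp
    qed
  qed (simp add: neg.mass_def)
  moreover have "(\<Sum>i | i < n \<and> lam i = c. Re ((Z * mat_adjoint Z) $$ (i, i)))
      = (\<Sum>i | i < n \<and> lam i = c. pos.mass q i) + (\<Sum>i | i < n \<and> lam i = c. neg.mass r i)"
    unfolding sum.distrib[symmetric]
    by (rule sum.cong) (simp_all add: Re_diag_mult_adjoint_self[OF Z] row_norm_eq_mass)
  ultimately show ?thesis unfolding level_def by linarith
qed

theorem exists_eigenbasis:
  "\<exists>W \<in> carrier_mat n (q + r). mat_adjoint W * W = 1\<^sub>m (q + r) \<and> Z * mat_adjoint Z * W = W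
     \<and> diagm n lam * W = W * diagm (q + r) extreme_eig"
proof -
  let ?P = "\<lambda>a b. (Z * mat_adjoint Z) $$ (a, b)"
  interpret proj: orth_projection n ?P by (rule orth_projection_mult_adjoint_self[OF Z orthonormal])
  define Cs where "Cs j = level (extreme_eig j)" for j
  have "\<exists>F. orthonormal_cols n (q + r) F \<and> (\<forall>a<n. \<forall>j<q + r. (\<Sum>m<n. ?P a m * F m j) = F a j)
           \<and> (\<forall>i<n. \<forall>j<q + r. F i j \<noteq> 0 \<longrightarrow> i \<in> Cs j)"
  proof (rule proj.exists_orthonormal_cols_adapted)
    show "Cs j \<subseteq> {..<n}" for j unfolding Cs_def level_def by auto
    show "Cs j = Cs j' \<or> Cs j \<inter> Cs j' = {}" for j j'
      unfolding Cs_def level_def by (cases "extreme_eig j = extreme_eig j'") auto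
    show "?P i j = 0" if "c < q + r" "i < n" "j \<in> Cs c" "i \<notin> Cs c" for c i j
      using projection_level_preserving[of i j] that unfolding Cs_def level_def by auto
    show "real (card {j'. j' \<le> j \<and> Cs j' = Cs j}) \<le> (\<Sum>i\<in>Cs j. Re (?P i i))" if j: "j < q + r" for j
    proof -
      have "{j'. j' \<le> j \<and> Cs j' = Cs j} \<subseteq> {j'. j' < q + r \<and> extreme_eig j' = extreme_eig j}"
      proof
        fix j' assume "j' \<in> {j'. j' \<le> j \<and> Cs j' = Cs j}"
        then have "j' < q + r" "Cs j' = Cs j" using j by auto
        then show "j' \<in> {j'. j' < q + r \<and> extreme_eig j' = extreme_eig j}"
          using level_extreme_eig_eq_iff[of j' j] unfolding Cs_def by simp
      qed
      then have "card {j'. j' \<le> j \<and> Cs j' = Cs j} \<le> card {j'. j' < q + r \<and> extreme_eig j' = extreme_eig j}"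
        by (rule card_mono[rotated]) simp
      then show ?thesis using card_extreme_level_le[of "extreme_eig j"] unfolding Cs_def by simp
    qed
  qed
  then obtain F where F: "orthonormal_cols n (q + r) F"
    and PF: "\<And>a j. a < n \<Longrightarrow> j < q + r \<Longrightarrow> (\<Sum>m<n. ?P a m * F m j) = F a j"
    and FC: "\<And>i j. i < n \<Longrightarrow> j < q + r \<Longrightarrow> F i j \<noteq> 0 \<Longrightarrow> lam i = extreme_eig j"
    unfolding Cs_def level_def by blast
  define W where "W = mat n (q + r) (\<lambda>(i, j). F i j)"
  have W: "W \<in> carrier_mat n (q + r)" unfolding W_def by simp
  have "(\<Sum>m<n. cnj (W $$ (m, j)) * W $$ (m, j')) = (\<Sum>m<n. cnj (F m j) * F m j')"
    if "j < q + r" "j' < q + r" for j j'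
    by (rule sum.cong) (use that in \<open>auto simp: W_def\<close>)
  then have "mat_adjoint W * W = 1\<^sub>m (q + r)"
    unfolding adjoint_mult_self_eq_one_iff[OF W] using F by (simp add: orthonormal_cols_def)
  moreover have "Z * mat_adjoint Z * W = W"
    by (rule eq_matI) (use Z W PF in \<open>auto simp: W_def index_mult_mat_sum simp del: index_mult_mat(1)\<close>)
  moreover have "diagm n lam * W = W * diagm (q + r) extreme_eig"
    by (rule diagm_mult_eq_mult_diagm[OF W]) (use FC in \<open>simp add: W_def\<close>)
  ultimately show ?thesis using W by blast
qed

theorem adjoint_diagm_mult_eq_if_strict:
  assumes strict: "\<And>i j. i < j \<Longrightarrow> j < q + r \<Longrightarrow> w j < w i"
  shows "mat_adjoint Z * diagm n lam * Z = diagm (q + r) extreme_eig"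
proof -
  have "lam i = extreme_eig m" if i: "i < n" and m: "m < q + r" and nz: "Z $$ (i, m) \<noteq> 0" for i m
  proof (cases "m < q")
    case True
    then show ?thesis
      using pos.support_of_weighted_eq[OF _ _ pos_eq, of i m] strict w_sorted w_pos i nz
      unfolding extreme_eig_def by (force intro: less_imp_le)
  next
    case False
    define t where "t = m - q"
    have t: "t < r" "m = q + t" using False m unfolding t_def by auto
    have "m + n - (q + r) = n - r + t" using t qr_le by simp
    then have "extreme_eig m = lam (n - r + t)" using False unfolding extreme_eig_def by simp
    show ?thesis
      using neg.support_of_weighted_eq_top[OF _ _ neg_eq, of i t] strict w_sorted w_neg i nz t
        \<open>extreme_eig m = lam (n - r + t)\<close> by (force intro: less_imp_le)
  qed
  then have "diagm n lam * Z = Z * diagm (q + r) extreme_eig"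
    by (rule diagm_mult_eq_mult_diagm[OF Z])
  then have "mat_adjoint Z * (diagm n lam * Z) = mat_adjoint Z * Z * diagm (q + r) extreme_eig"
    using assoc_mult_mat[OF mat_adjoint_carrier[OF Z] Z diagm_carrier] by simp
  then show ?thesis
    using assoc_mult_mat[OF mat_adjoint_carrier[OF Z] diagm_carrier Z] orthonormal by simp
qed

end

section \<open>Reduction of the pencil\<close>

locale pencil_diagonalization =
  fixes n :: nat and A B U :: "complex mat" and lam :: "nat \<Rightarrow> real"
  assumes A: "hermitian_mat n A" and B: "hermitian_mat n B" and U: "U \<in> carrier_mat n n"
    and UAU: "mat_adjoint U * A * U = diagm n lam" and UBU: "mat_adjoint U * B * U = 1\<^sub>m n"
begin

lemma A_carrier: "A \<in> carrier_mat n n" and B_carrier: "B \<in> carrier_mat n n"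
  using A B unfolding hermitian_mat_def by auto

lemma U_adjoint_carrier: "mat_adjoint U \<in> carrier_mat n n"
  using U by (rule mat_adjoint_carrier)

lemma U_right_inverse: "U * (mat_adjoint U * B) = 1\<^sub>m n"
  using mat_mult_left_right_inverse[OF mult_carrier_mat[OF U_adjoint_carrier B_carrier] U]
    assoc_mult_mat[OF U_adjoint_carrier B_carrier U] UBU by simp

lemma mult_coords: "X \<in> carrier_mat n r \<Longrightarrow> U * (mat_adjoint U * B * X) = X"
  using assoc_mult_mat[OF U mult_carrier_mat[OF U_adjoint_carrier B_carrier], of X r]
  by (simp add: U_right_inverse)

lemma B_congruence: "N \<in> carrier_mat n r \<Longrightarrow> mat_adjoint (U * N) * B * (U * N) = mat_adjoint N * N"
  using adjoint_mult_congruence[OF U _ B_carrier] UBU by (simp add: mat_adjoint_carrier)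

lemma A_congruence:
  "N \<in> carrier_mat n r \<Longrightarrow> mat_adjoint (U * N) * A * (U * N) = mat_adjoint N * diagm n lam * N"
  using adjoint_mult_congruence[OF U _ A_carrier] UAU by simp

lemma B_mult_U_right_inverse: "B * (U * mat_adjoint U) = 1\<^sub>m n"
proof -
  have "mat_adjoint (U * (mat_adjoint U * B)) = mat_adjoint (mat_adjoint U * B) * mat_adjoint U"
    by (rule mat_adjoint_mult[OF U mult_carrier_mat[OF U_adjoint_carrier B_carrier]])
  also have "mat_adjoint (mat_adjoint U * B) = B * U"
    using mat_adjoint_mult[OF U_adjoint_carrier B_carrier] B unfolding hermitian_mat_def by simp
  finally show ?thesis
    using U_right_inverse assoc_mult_mat[OF B_carrier U U_adjoint_carrier] by simp
qed

lemma A_mult_U: "A * U = B * U * diagm n lam"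
proof -
  have AU: "A * U \<in> carrier_mat n n" using mult_carrier_mat[OF A_carrier U] .
  have UU: "U * mat_adjoint U \<in> carrier_mat n n" using mult_carrier_mat[OF U U_adjoint_carrier] .
  have "A * U = B * (U * mat_adjoint U) * (A * U)"
    using B_mult_U_right_inverse left_mult_one_mat[OF AU] by simp
  also have "\<dots> = B * (U * (mat_adjoint U * (A * U)))"
    using assoc_mult_mat[OF B_carrier UU AU] assoc_mult_mat[OF U U_adjoint_carrier AU] by simp
  also have "mat_adjoint U * (A * U) = diagm n lam"
    using assoc_mult_mat[OF U_adjoint_carrier A_carrier U] UAU by simp
  finally show ?thesis using assoc_mult_mat[OF B_carrier U diagm_carrier] by simp
qed

text \<open>W spans the same space as Z, so R = Z^H W is unitary and U W = U Z R is a B-orthonormal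
  eigenbasis of the pencil spanning the range of U Z.\<close>

lemma pencil_eigenspace_of_eigenbasis:
  assumes Z: "Z \<in> carrier_mat n p" and ZZ: "mat_adjoint Z * Z = 1\<^sub>m p"
    and W: "W \<in> carrier_mat n p" and WW: "mat_adjoint W * W = 1\<^sub>m p"
    and range: "Z * mat_adjoint Z * W = W" and eig: "diagm n lam * W = W * diagm p mu"
  shows "pencil_eigenspace n A B p mu (colspace (U * Z))"
proof -
  have Za: "mat_adjoint Z \<in> carrier_mat p n" and Wa: "mat_adjoint W \<in> carrier_mat p n"
    using Z W by (simp_all add: mat_adjoint_carrier)
  define R where "R = mat_adjoint Z * W"
  have R: "R \<in> carrier_mat p p" and Ra: "mat_adjoint R \<in> carrier_mat p p"
    unfolding R_def using mult_carrier_mat[OF Za W] by (simp_all add: mat_adjoint_carrier)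
  have ZR: "Z * R = W" unfolding R_def using assoc_mult_mat[OF Z Za W] range by simp
  have "mat_adjoint R * R = mat_adjoint W * (Z * R)"
    unfolding R_def mat_adjoint_mult[OF Za W] using assoc_mult_mat[OF Wa Z mult_carrier_mat[OF Za W]]
    by simp
  then have "mat_adjoint R * R = 1\<^sub>m p" using ZR WW by simp
  then have RR: "R * mat_adjoint R = 1\<^sub>m p" by (rule mat_mult_left_right_inverse[OF Ra R])
  define V where "V = U * W"
  have V: "V \<in> carrier_mat n p" unfolding V_def using mult_carrier_mat[OF U W] .
  have "mat_adjoint V * B * V = 1\<^sub>m p" unfolding V_def using B_congruence[OF W] WW by simp
  moreover have "A * V = B * V * diagm p mu"
  proof -
    have "A * V = B * U * (diagm n lam * W)"
      unfolding V_def using assoc_mult_mat[OF A_carrier U W] A_mult_U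
        assoc_mult_mat[OF mult_carrier_mat[OF B_carrier U] diagm_carrier W] by simp
    also have "\<dots> = B * V * diagm p mu"
      unfolding eig V_def using assoc_mult_mat[OF mult_carrier_mat[OF B_carrier U] W diagm_carrier]
        assoc_mult_mat[OF B_carrier U W] by simp
    finally show ?thesis .
  qed
  moreover have "colspace V = colspace (U * Z)"
    using colspace_mult_right_invertible[OF mult_carrier_mat[OF U Z] R Ra RR]
      assoc_mult_mat[OF U Z R] ZR unfolding V_def by simp
  ultimately show ?thesis unfolding pencil_eigenspace_def using V by blast
qed

end

section \<open>The trace minimization problem\<close>

lemma down_closed_eq_lessThan_card:
  assumes S: "S \<subseteq> {..<k}" and closed: "\<And>i j. i \<le> j \<Longrightarrow> j \<in> S \<Longrightarrow> i \<in> S"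
  shows "S = {..<card S}"
proof (cases "S = {}")
  case False
  have fin: "finite S" using S finite_subset by blast
  have "S = {..Max S}"
  proof
    show "S \<subseteq> {..Max S}" using Max_ge[OF fin] by auto
    show "{..Max S} \<subseteq> S" using closed[of _ "Max S"] Max_in[OF fin False] by auto
  qed
  then show ?thesis by (metis card_lessThan lessThan_Suc_atMost)
qed simp

lemma up_closed_eq_atLeastLessThan_card:
  assumes S: "S \<subseteq> {..<k}" and closed: "\<And>i j. i \<le> j \<Longrightarrow> j < k \<Longrightarrow> i \<in> S \<Longrightarrow> j \<in> S"
  shows "S = {k - card S..<k}"
proof -
  have "{..<k} - S = {..<card ({..<k} - S)}"
  proof (rule down_closed_eq_lessThan_card[of _ k])
    show "i \<in> {..<k} - S" if "i \<le> j" "j \<in> {..<k} - S" for i j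
      using that closed[of i j] by auto
  qed auto
  moreover have "card ({..<k} - S) = k - card S"
    using card_Diff_subset[OF finite_subset[OF S finite_lessThan] S] by simp
  ultimately have compl: "{..<k} - S = {..<k - card S}" by simp
  have "x \<in> S \<longleftrightarrow> x \<in> {k - card S..<k}" for x
  proof -
    have "x \<in> {..<k} - S \<longleftrightarrow> x \<in> {..<k - card S}" by (simp only: compl)
    then show ?thesis using S by (cases "x < k") auto
  qed
  then show ?thesis by blast
qed

locale trace_min_problem = pencil_diagonalization +
  fixes k :: nat and D Q :: "complex mat" and \<omega> :: "nat \<Rightarrow> real"
  assumes k_le: "k \<le> n"
    and lam_sorted: "\<And>i j. i \<le> j \<Longrightarrow> j < n \<Longrightarrow> lam i \<le> lam j"
    and D: "hermitian_mat k D" and Q: "unitary_mat k Q"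
    and QDQ: "mat_adjoint Q * D * Q = diagm k \<omega>"
    and \<omega>_sorted: "\<And>i j. i \<le> j \<Longrightarrow> j < k \<Longrightarrow> \<omega> j \<le> \<omega> i"
begin

lemma Q_carrier: "Q \<in> carrier_mat k k" and Q_adjoint_carrier: "mat_adjoint Q \<in> carrier_mat k k"
  and D_carrier: "D \<in> carrier_mat k k"
  using Q D unfolding unitary_mat_def hermitian_mat_def by (auto simp: mat_adjoint_carrier)

definition coords :: "complex mat \<Rightarrow> complex mat" where
  "coords X = mat_adjoint U * B * X * Q"

lemma coords_carrier: "X \<in> carrier_mat n k \<Longrightarrow> coords X \<in> carrier_mat n k"
  unfolding coords_def
  using mult_carrier_mat[OF mult_carrier_mat[OF mult_carrier_mat[OF U_adjoint_carrier B_carrier]] Q_carrier]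
  by blast

lemma mult_Q_eq_coords: "X \<in> carrier_mat n k \<Longrightarrow> X * Q = U * coords X"
  unfolding coords_def
  using assoc_mult_mat[OF U mult_carrier_mat[OF mult_carrier_mat[OF U_adjoint_carrier B_carrier]] Q_carrier]
    mult_coords by (metis carrier_matD(2) carrier_matI)

lemma eq_coords: "X \<in> carrier_mat n k \<Longrightarrow> X = U * (coords X * mat_adjoint Q)"
  using assoc_mult_mat[OF U coords_carrier Q_adjoint_carrier] mult_Q_eq_coords
    assoc_mult_mat[OF _ Q_carrier Q_adjoint_carrier] unitary_mat_mult_adjoint[OF Q]
  by (metis right_mult_one_mat)

lemma coords_orthonormal:
  assumes X: "X \<in> carrier_mat n k" and XBX: "mat_adjoint X * B * X = 1\<^sub>m k"
  shows "mat_adjoint (coords X) * coords X = 1\<^sub>m k"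
proof -
  define N where "N = mat_adjoint U * B * X"
  have N: "N \<in> carrier_mat n k" unfolding N_def using mult_carrier_mat[OF mult_carrier_mat[OF U_adjoint_carrier B_carrier] X] .
  have "mat_adjoint N * N = 1\<^sub>m k" using B_congruence[OF N] mult_coords[OF X] XBX unfolding N_def by simp
  moreover have "mat_adjoint (N * Q) * (N * Q) = mat_adjoint Q * (mat_adjoint N * N) * Q"
    using adjoint_mult_congruence[OF N Q_carrier one_carrier_mat[of n]]
      right_mult_one_mat[OF mat_adjoint_carrier[OF mult_carrier_mat[OF N Q_carrier]]]
      right_mult_one_mat[OF mat_adjoint_carrier[OF N]] by simp
  ultimately show ?thesis
    using Q right_mult_one_mat[OF Q_adjoint_carrier] unfolding coords_def N_def[symmetric] unitary_mat_def
    by simp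
qed

lemma trace_of_pencil_coords:
  assumes Z: "Z \<in> carrier_mat n k"
  defines "X \<equiv> U * (Z * mat_adjoint Q)"
  shows "mtrace (D * mat_adjoint X * A * X)
    = complex_of_real (\<Sum>j<k. \<omega> j * (\<Sum>i<n. lam i * (cmod (Z $$ (i, j)))\<^sup>2))"
proof -
  have M: "Z * mat_adjoint Q \<in> carrier_mat n k" using mult_carrier_mat[OF Z Q_adjoint_carrier] .
  have X: "X \<in> carrier_mat n k" unfolding X_def using mult_carrier_mat[OF U M] .
  have "D * mat_adjoint X * A * X = D * (mat_adjoint X * A * X)"
    using X assoc_mult_mat[OF D_carrier mat_adjoint_carrier[OF X] A_carrier]
      assoc_mult_mat[OF D_carrier mult_carrier_mat[OF mat_adjoint_carrier[OF X] A_carrier] X] by simp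
  also have "mat_adjoint X * A * X = mat_adjoint (Z * mat_adjoint Q) * diagm n lam * (Z * mat_adjoint Q)"
    unfolding X_def by (rule A_congruence[OF M])
  finally show ?thesis using mtrace_unitary_weighted[OF D_carrier Q QDQ Z] by simp
qed

lemma trace_eq_coords:
  "X \<in> carrier_mat n k \<Longrightarrow> mtrace (D * mat_adjoint X * A * X)
    = complex_of_real (\<Sum>j<k. \<omega> j * (\<Sum>i<n. lam i * (cmod (coords X $$ (i, j)))\<^sup>2))"
proof -
  assume X: "X \<in> carrier_mat n k"
  define Z where "Z = coords X"
  have "X = U * (Z * mat_adjoint Q)" unfolding Z_def by (rule eq_coords[OF X])
  then show ?thesis
    unfolding Z_def[symmetric] using trace_of_pencil_coords[OF coords_carrier[OF X], folded Z_def] by simp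
qed

definition lp :: nat where "lp = card {i. i < k \<and> 0 < \<omega> i}"

definition lm :: nat where "lm = card {i. i < k \<and> \<omega> i < 0}"

lemma pos_iff: "j < k \<Longrightarrow> 0 < \<omega> j \<longleftrightarrow> j < lp"
proof -
  have "{i. i < k \<and> 0 < \<omega> i} = {..<lp}" unfolding lp_def
    by (rule down_closed_eq_lessThan_card[of _ k]) (use \<omega>_sorted in \<open>auto intro: less_le_trans\<close>)
  then show "j < k \<Longrightarrow> 0 < \<omega> j \<longleftrightarrow> j < lp" by (auto simp: set_eq_iff)
qed

lemma neg_iff: "j < k \<Longrightarrow> \<omega> j < 0 \<longleftrightarrow> k - lm \<le> j"
proof -
  have "{i. i < k \<and> \<omega> i < 0} = {k - lm..<k}" unfolding lm_def
    by (rule up_closed_eq_atLeastLessThan_card[of _ k]) (use \<omega>_sorted in \<open>auto intro: le_less_trans\<close>)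
  then show "j < k \<Longrightarrow> \<omega> j < 0 \<longleftrightarrow> k - lm \<le> j" by (auto simp: set_eq_iff)
qed

lemma lp_lm_le: "lp + lm \<le> k"
proof -
  have "lp \<le> k" "lm \<le> k" unfolding lp_def lm_def by (auto intro: card_mono[of "{..<k}", simplified])
  moreover have "\<not> k - lm < lp"
    using pos_iff[of "k - lm"] neg_iff[of "k - lm"] \<open>lp \<le> k\<close> by (cases "k - lm < k") auto
  ultimately show ?thesis by linarith
qed

lemma zero_between: "lp \<le> j \<Longrightarrow> j < k - lm \<Longrightarrow> \<omega> j = 0"
  using pos_iff[of j] neg_iff[of j] by fastforce

definition sig :: "nat \<Rightarrow> nat" where
  "sig m = (if m < lp then m else m + k - (lp + lm))"

lemma sum_drop_zero_weights: "(\<Sum>j<k. \<omega> j * g j) = (\<Sum>m<lp + lm. \<omega> (sig m) * g (sig m))"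
proof -
  define d where "d = k - (lp + lm)"
  have "{..<k} = {..<lp + (d + lm)}"
    by (rule arg_cong[where f = lessThan]) (use lp_lm_le in \<open>simp add: d_def\<close>)
  moreover have "(\<Sum>t<d. \<omega> (lp + t) * g (lp + t)) = 0"
    using zero_between unfolding d_def by (intro sum.neutral) simp
  ultimately have "(\<Sum>j<k. \<omega> j * g j) = (\<Sum>j<lp. \<omega> j * g j) + (\<Sum>s<lm. \<omega> (lp + (d + s)) * g (lp + (d + s)))"
    by (simp only: sum_lessThan_add add.assoc)
  moreover have "sig (lp + s) = lp + (d + s)" for s using lp_lm_le unfolding sig_def d_def by simp
  ultimately show ?thesis unfolding sum_lessThan_add by (simp add: sig_def)
qed

sublocale signed: signed_weights n lp lm lam "\<lambda>m. \<omega> (sig m)"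
proof
  show "lp + lm \<le> n" using lp_lm_le k_le by simp
  show "\<omega> (sig j) \<le> \<omega> (sig i)" if "i \<le> j" "j < lp + lm" for i j
    using \<omega>_sorted[of "sig i" "sig j"] that lp_lm_le unfolding sig_def by auto
  show "0 < \<omega> (sig j)" if "j < lp" for j
    using pos_iff[of j] that lp_lm_le unfolding sig_def by auto
  show "\<omega> (sig j) < 0" if "lp \<le> j" "j < lp + lm" for j
    using neg_iff[of "sig j"] that lp_lm_le unfolding sig_def by auto
qed (rule lam_sorted)

lemma index_first_last_cols_sig:
  "Z \<in> carrier_mat n k \<Longrightarrow> i < n \<Longrightarrow> m < lp + lm \<Longrightarrow> first_last_cols lp lm Z $$ (i, m) = Z $$ (i, sig m)"
  using index_first_last_cols[of i Z m lp lm] unfolding sig_def by simp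

lemma signed_weights_frame_coords:
  assumes X: "X \<in> carrier_mat n k" and XBX: "mat_adjoint X * B * X = 1\<^sub>m k"
  shows "signed_weights_frame n lp lm lam (\<lambda>m. \<omega> (sig m)) (first_last_cols lp lm (coords X))"
proof
  show "first_last_cols lp lm (coords X) \<in> carrier_mat n (lp + lm)"
    using first_last_cols_carrier[of lp lm "coords X"] coords_carrier[OF X] by simp
  show "mat_adjoint (first_last_cols lp lm (coords X)) * first_last_cols lp lm (coords X) = 1\<^sub>m (lp + lm)"
    by (rule first_last_cols_orthonormal[OF coords_carrier[OF X] coords_orthonormal[OF X XBX] lp_lm_le])
qed

lemma trace_eq_objective:
  assumes X: "X \<in> carrier_mat n k"
  shows "mtrace (D * mat_adjoint X * A * X) = complex_of_real (signed.objective (first_last_cols lp lm (coords X)))"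
proof -
  have "(\<Sum>i<n. lam i * (cmod (coords X $$ (i, sig m)))\<^sup>2)
      = (\<Sum>i<n. lam i * (cmod (first_last_cols lp lm (coords X) $$ (i, m)))\<^sup>2)" if "m < lp + lm" for m
    using index_first_last_cols_sig[OF coords_carrier[OF X] _ that] by simp
  then show ?thesis unfolding trace_eq_coords[OF X] sum_drop_zero_weights signed.objective_def by simp
qed

lemma attains_optimum:
  "complex_of_real signed.optimum
    \<in> (\<lambda>X. mtrace (D * mat_adjoint X * A * X)) ` {X \<in> carrier_mat n k. mat_adjoint X * B * X = 1\<^sub>m k}"
proof -
  define e where "e j = (if j < lp then j else j + n - k)" for j
  define Z where "Z = selection_mat n k e"
  have e: "inj_on e {..<k}" "e ` {..<k} \<subseteq> {..<n}" using k_le unfolding e_def inj_on_def by auto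
  have Z: "Z \<in> carrier_mat n k" unfolding Z_def by (rule selection_mat_carrier)
  have ZZ: "mat_adjoint Z * Z = 1\<^sub>m k" unfolding Z_def by (rule selection_mat_orthonormal[OF e])
  define X where "X = U * (Z * mat_adjoint Q)"
  have M: "Z * mat_adjoint Q \<in> carrier_mat n k" using mult_carrier_mat[OF Z Q_adjoint_carrier] .
  have X: "X \<in> carrier_mat n k" unfolding X_def using mult_carrier_mat[OF U M] .
  have "mat_adjoint X * B * X = Q * (mat_adjoint Z * Z) * mat_adjoint Q"
    unfolding X_def B_congruence[OF M]
    using adjoint_mult_congruence[OF Z Q_adjoint_carrier one_carrier_mat[of n]]
      right_mult_one_mat[OF mat_adjoint_carrier[OF M]] right_mult_one_mat[OF mat_adjoint_carrier[OF Z]]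
    by simp
  then have "mat_adjoint X * B * X = 1\<^sub>m k"
    using ZZ unitary_mat_mult_adjoint[OF Q] right_mult_one_mat[OF Q_carrier] by simp
  moreover have "(\<Sum>i<n. lam i * (cmod (Z $$ (i, j)))\<^sup>2) = lam (e j)" if "j < k" for j
  proof -
    have "(\<Sum>i<n. lam i * (cmod (Z $$ (i, j)))\<^sup>2) = (\<Sum>i<n. if i = e j then lam (e j) else 0)"
      by (rule sum.cong) (use that in \<open>auto simp: Z_def selection_mat_def\<close>)
    then show ?thesis using e that by auto
  qed
  then have "mtrace (D * mat_adjoint X * A * X) = complex_of_real (\<Sum>j<k. \<omega> j * lam (e j))"
    unfolding X_def trace_of_pencil_coords[OF Z] by simp
  moreover have "(\<Sum>j<k. \<omega> j * lam (e j)) = signed.optimum"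
    unfolding sum_drop_zero_weights signed.optimum_def
    using lp_lm_le by (intro sum.cong) (auto simp: e_def sig_def signed.extreme_eig_def)
  ultimately show ?thesis using X by force
qed

lemma optimum_le_trace:
  assumes X: "X \<in> carrier_mat n k" and XBX: "mat_adjoint X * B * X = 1\<^sub>m k"
  shows "mtrace (D * mat_adjoint X * A * X) \<in> \<real> \<and> signed.optimum \<le> Re (mtrace (D * mat_adjoint X * A * X))"
  using signed_weights_frame.optimum_le_objective[OF signed_weights_frame_coords[OF X XBX]] trace_eq_objective[OF X]
  by simp

lemma minimizer_properties:
  assumes X: "X \<in> carrier_mat n k" and XBX: "mat_adjoint X * B * X = 1\<^sub>m k"
    and opt: "mtrace (D * mat_adjoint X * A * X) = complex_of_real signed.optimum"
  shows "pencil_eigenspace n A B (lp + lm) signed.extreme_eig (colspace (X * first_last_cols lp lm Q))"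
    and "(\<forall>i<k. \<forall>j<k. i \<noteq> j \<longrightarrow> \<omega> i \<noteq> 0 \<longrightarrow> \<omega> i \<noteq> \<omega> j) \<Longrightarrow>
      mat_adjoint (X * first_last_cols lp lm Q) * A * (X * first_last_cols lp lm Q)
        = diagm (lp + lm) signed.extreme_eig"
proof -
  define Z where "Z = first_last_cols lp lm (coords X)"
  interpret signed_weights_minimizer n lp lm lam "\<lambda>m. \<omega> (sig m)" Z
  proof -
    interpret signed_weights_frame n lp lm lam "\<lambda>m. \<omega> (sig m)" Z
      unfolding Z_def by (rule signed_weights_frame_coords[OF X XBX])
    show "signed_weights_minimizer n lp lm lam (\<lambda>m. \<omega> (sig m)) Z"
      by unfold_locales (use opt trace_eq_objective[OF X] in \<open>simp add: Z_def\<close>)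
  qed
  have XQ: "X * first_last_cols lp lm Q = U * Z"
    using mult_first_last_cols[of X Q lp lm] mult_first_last_cols[of U "coords X" lp lm]
      mult_Q_eq_coords[OF X] X Q_carrier U coords_carrier[OF X] lp_lm_le unfolding Z_def by simp
  obtain W where "W \<in> carrier_mat n (lp + lm)" "mat_adjoint W * W = 1\<^sub>m (lp + lm)"
    "Z * mat_adjoint Z * W = W" "diagm n lam * W = W * diagm (lp + lm) signed.extreme_eig"
    using exists_eigenbasis by blast
  then show "pencil_eigenspace n A B (lp + lm) signed.extreme_eig (colspace (X * first_last_cols lp lm Q))"
    unfolding XQ by (intro pencil_eigenspace_of_eigenbasis[OF Z orthonormal])
  assume distinct: "\<forall>i<k. \<forall>j<k. i \<noteq> j \<longrightarrow> \<omega> i \<noteq> 0 \<longrightarrow> \<omega> i \<noteq> \<omega> j"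
  have "\<omega> (sig j) < \<omega> (sig i)" if "i < j" "j < lp + lm" for i j
  proof -
    have "sig i < sig j" "sig j < k" using that lp_lm_le unfolding sig_def by auto
    moreover have "\<omega> (sig i) \<noteq> 0"
      using signed.w_pos[of i] signed.w_neg[of i] that by (cases "i < lp") auto
    ultimately have "\<omega> (sig i) \<noteq> \<omega> (sig j)" "\<omega> (sig j) \<le> \<omega> (sig i)"
      using distinct \<omega>_sorted[of "sig i" "sig j"] by auto
    then show ?thesis by linarith
  qed
  then show "mat_adjoint (X * first_last_cols lp lm Q) * A * (X * first_last_cols lp lm Q)
      = diagm (lp + lm) signed.extreme_eig"
    unfolding XQ A_congruence[OF Z] by (rule adjoint_diagm_mult_eq_if_strict)
qed

lemma value_eq_optimum:
  assumes l: "l \<le> k" and pos: "\<And>i. i < l \<Longrightarrow> 0 \<le> \<omega> i" and neg: "\<And>i. l \<le> i \<Longrightarrow> i < k \<Longrightarrow> \<omega> i \<le> 0"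
  shows "(\<Sum>i<l. \<omega> i * lam i) + (\<Sum>i\<in>{l..<k}. \<omega> i * lam (i + n - k)) = signed.optimum"
proof -
  have lp: "lp \<le> l" using pos_iff[of l] neg[of l] l lp_lm_le by (cases "l < k") auto
  have lm: "l \<le> k - lm"
  proof (rule ccontr)
    assume "\<not> l \<le> k - lm"
    then have "k - lm < l" "k - lm < k" using l by auto
    then show False using pos[of "k - lm"] neg_iff[of "k - lm"] by auto
  qed
  define e where "e j = (if j < l then j else j + n - k)" for j
  have "(\<Sum>i<l. \<omega> i * lam i) + (\<Sum>i\<in>{l..<k}. \<omega> i * lam (i + n - k)) = (\<Sum>j<k. \<omega> j * lam (e j))"
    using sum.atLeastLessThan_concat[of 0 l k "\<lambda>j. \<omega> j * lam (e j)"] l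
    by (simp add: e_def atLeast0LessThan)
  also have "\<dots> = signed.optimum"
    unfolding sum_drop_zero_weights signed.optimum_def
    using lp lm lp_lm_le by (intro sum.cong) (auto simp: e_def sig_def signed.extreme_eig_def)
  finally show ?thesis .
qed

lemma sign_counts_if_nonsingular:
  assumes det: "det D \<noteq> 0" and l: "l \<le> k"
    and pos: "\<And>i. i < l \<Longrightarrow> 0 \<le> \<omega> i" and neg: "\<And>i. l \<le> i \<Longrightarrow> i < k \<Longrightarrow> \<omega> i \<le> 0"
  shows "lp = l" "lm = k - l"
proof -
  have nz: "\<omega> i \<noteq> 0" if "i < k" for i
    by (rule diagm_entry_nonzero_if_det_nonzero[OF D_carrier Q QDQ det that])
  have pos_set: "i < k \<and> 0 < \<omega> i \<longleftrightarrow> i < l" for i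
  proof
    assume "i < k \<and> 0 < \<omega> i"
    then show "i < l" using neg[of i] by (cases "l \<le> i") auto
  next
    assume "i < l"
    then show "i < k \<and> 0 < \<omega> i" using pos[of i] nz[of i] l by auto
  qed
  have neg_set: "i < k \<and> \<omega> i < 0 \<longleftrightarrow> l \<le> i \<and> i < k" for i
  proof
    assume "i < k \<and> \<omega> i < 0"
    then show "l \<le> i \<and> i < k" using pos[of i] by (cases "i < l") auto
  next
    assume "l \<le> i \<and> i < k"
    then show "i < k \<and> \<omega> i < 0" using neg[of i] nz[of i] by auto
  qed
  have "{i. i < k \<and> 0 < \<omega> i} = {..<l}" "{i. i < k \<and> \<omega> i < 0} = {l..<k}"
    unfolding set_eq_iff using pos_set neg_set by simp_all
  then show "lp = l" "lm = k - l" unfolding lp_def lm_def by simp_all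
qed

lemma minimizer_properties_nonsingular:
  assumes X: "X \<in> carrier_mat n k" and XBX: "mat_adjoint X * B * X = 1\<^sub>m k"
    and opt: "mtrace (D * mat_adjoint X * A * X) = complex_of_real signed.optimum"
    and det: "det D \<noteq> 0" and l: "l \<le> k"
    and pos: "\<And>i. i < l \<Longrightarrow> 0 \<le> \<omega> i" and neg: "\<And>i. l \<le> i \<Longrightarrow> i < k \<Longrightarrow> \<omega> i \<le> 0"
  shows "pencil_eigenspace n A B k (\<lambda>j. if j < l then lam j else lam (j + n - k)) (colspace (X * Q))"
    and "(\<forall>i<k. \<forall>j<k. i \<noteq> j \<longrightarrow> \<omega> i \<noteq> \<omega> j) \<Longrightarrow>
      mat_adjoint (X * Q) * A * (X * Q) = diagm k (\<lambda>j. if j < l then lam j else lam (j + n - k))"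
proof -
  have lp: "lp = l" and lp_lm: "lp + lm = k" using sign_counts_if_nonsingular[OF det l pos neg] l by auto
  have Q_eq: "first_last_cols lp lm Q = Q" using first_last_cols_all[of lp lm Q] Q_carrier lp_lm by simp
  have eig: "signed.extreme_eig = (\<lambda>j. if j < l then lam j else lam (j + n - k))"
    unfolding signed.extreme_eig_def[abs_def] lp_lm unfolding lp ..
  show "pencil_eigenspace n A B k (\<lambda>j. if j < l then lam j else lam (j + n - k)) (colspace (X * Q))"
    using minimizer_properties(1)[OF X XBX opt] unfolding Q_eq lp_lm eig .
  show "mat_adjoint (X * Q) * A * (X * Q) = diagm k (\<lambda>j. if j < l then lam j else lam (j + n - k))"
    if "\<forall>i<k. \<forall>j<k. i \<noteq> j \<longrightarrow> \<omega> i \<noteq> \<omega> j"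
    using minimizer_properties(2)[OF X XBX opt] that unfolding Q_eq lp_lm eig by blast
qed

end

theorem theorem2p1:
  fixes n k l :: nat and A B D U Q :: "complex mat"
    and lam \<omega> :: "nat \<Rightarrow> real"
  assumes kn: "k \<le> n"
    and A: "hermitian_mat n A" and B: "pos_def_mat n B" and D: "hermitian_mat k D"
    and lam_sorted: "\<And>i j. i \<le> j \<Longrightarrow> j < n \<Longrightarrow> lam i \<le> lam j"
    and U: "U \<in> carrier_mat n n"
    and UAU: "mat_adjoint U * A * U = diagm n lam"
    and UBU: "mat_adjoint U * B * U = 1\<^sub>m n"
    and Q: "unitary_mat k Q"
    and QDQ: "mat_adjoint Q * D * Q = diagm k \<omega>"
    and \<omega>_sorted: "\<And>i j. i \<le> j \<Longrightarrow> j < k \<Longrightarrow> \<omega> j \<le> \<omega> i"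
    and lk: "l \<le> k"
    and \<omega>_pos: "\<And>i. i < l \<Longrightarrow> 0 \<le> \<omega> i"
    and \<omega>_neg: "\<And>i. l \<le> i \<Longrightarrow> i < k \<Longrightarrow> \<omega> i \<le> 0"
  defines "val \<equiv> (\<Sum>i<l. \<omega> i * lam i) + (\<Sum>i\<in>{l..<k}. \<omega> i * lam (i + n - k))"
  defines "feasible \<equiv> {X \<in> carrier_mat n k. mat_adjoint X * B * X = 1\<^sub>m k}"
  shows "complex_of_real val \<in> (\<lambda>X. mtrace (D * mat_adjoint X * A * X)) ` feasible
     \<and> (\<forall>X \<in> feasible. mtrace (D * mat_adjoint X * A * X) \<in> \<real>
                          \<and> val \<le> Re (mtrace (D * mat_adjoint X * A * X)))
     \<and> (\<forall>X \<in> feasible. mtrace (D * mat_adjoint X * A * X) = complex_of_real val \<longrightarrow>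
          ((det D \<noteq> 0 \<longrightarrow>
              pencil_eigenspace n A B k (\<lambda>j. if j < l then lam j else lam (j + n - k))
                 (colspace (X * Q))
            \<and> ((\<forall>i<k. \<forall>j<k. i \<noteq> j \<longrightarrow> \<omega> i \<noteq> \<omega> j) \<longrightarrow>
                 mat_adjoint (X * Q) * A * (X * Q)
                   = diagm k (\<lambda>j. if j < l then lam j else lam (j + n - k))))
          \<and> (let lp = card {i. i < k \<and> 0 < \<omega> i}; lm = card {i. i < k \<and> \<omega> i < 0};
                 Qh = first_last_cols lp lm Q
             in pencil_eigenspace n A B (lp + lm)
                  (\<lambda>j. if j < lp then lam j else lam (j + n - (lp + lm))) (colspace (X * Qh))
                \<and> ((\<forall>i<k. \<forall>j<k. i \<noteq> j \<longrightarrow> \<omega> i \<noteq> 0 \<longrightarrow> \<omega> i \<noteq> \<omega> j) \<longrightarrow>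
                     mat_adjoint (X * Qh) * A * (X * Qh)
                       = diagm (lp + lm) (\<lambda>j. if j < lp then lam j else lam (j + n - (lp + lm)))))))"
proof -
  interpret trace_min_problem n A B U lam k D Q \<omega>
    using A B U UAU UBU kn lam_sorted D Q QDQ \<omega>_sorted
    by unfold_locales (simp_all add: pos_def_mat_def)
  have val: "val = signed.optimum"
    unfolding val_def by (rule value_eq_optimum[OF lk \<omega>_pos \<omega>_neg])
  show ?thesis
    unfolding Let_def lp_def[symmetric] lm_def[symmetric] signed.extreme_eig_def[abs_def, symmetric]
    using attains_optimum optimum_le_trace minimizer_properties
      minimizer_properties_nonsingular[OF _ _ _ _ lk \<omega>_pos \<omega>_neg]
    unfolding feasible_def val by blast
qed

end
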